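(* Let $G$ be an amenable Hausdorff topological group, locally compact or SIN, acting continuously by isometries on a pointed metric space $(\mathcal{M},d,0)$ with bounded orbits; let $M$ be a bi-invariant mean on $G$ and $X=\mathcal{F}(\mathcal{M})$. Suppose $Q:X^{**}\to X^{**}$ is a bounded linear projection with $Q[X^{**}]=\kappa_X(X)$ and $T_g^{**}(\ker Q)\subset\ker Q$ for every $g\in G$. Let $R_G:X\to X^{**}$, $R_G(\mu)(f)=M(g\mapsto f(T_g\mu))$, let $P_G:=\kappa_X^{-1}\circ Q\circ R_G$ (a projection onto $I_G=\{\mu\in X: T_g\mu=\mu\ \forall g\}$), and let $\Psi:\mathrm{Lip}_0(\mathcal{M}/G)\to\mathrm{Lip}_0^G(\mathcal{M})$, $\Psi(f)(x)=f([Gx])$. If $Y\subset\mathrm{Lip}_0(\mathcal{M}/G)$ separates the points of $\mathcal{F}(\mathcal{M}/G)$ and $\ker P_G\subset\Psi(Y)_\perp$, then $\ker P_G=\mathrm{Lip}_0^G(\mathcal{M})_\perp$ and $P_G[X]$ is isomorphic to $\mathcal{F}(\mathcal{M}/G)$ via a linear isomorphism $T:\mathcal{F}(\mathcal{M}/G)\to P_G[X]$ with $T(\delta([Gx]))=P_G(\delta(x))$ whose inverse is the restriction to $P_G[X]$ of the norm-at-most-one operator $S:\mathcal{F}(\mathcal{M})\to\mathcal{F}(\mathcal{M}/G)$, $S(\delta(x))=\delta([Gx])$, and $\|T\|\le\|Q\|$. In particular $\mathcal{F}(\mathcal{M}/G)$ is isomorphic to a complemented subspace of $\mathcal{F}(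\mathcal{M})$.
   Context: $\mathrm{Lip}_0(N)$: real Lipschitz functions on a pointed metric space $N$ vanishing at the base point, normed by the Lipschitz constant; $\delta(m)$ evaluation at $m$; $\mathcal{F}(N)=\overline{\mathrm{span}}\{\delta(m):m\in N\}\subset\mathrm{Lip}_0(N)^*$, so $\mathcal{F}(N)^*=\mathrm{Lip}_0(N)$. $\kappa_X:X\to X^{**}$ is the canonical embedding; for $A\subset X^*$, $A_\perp=\{x\in X:a(x)=0\ \forall a\in A\}$. For $g\in G$, $T_g$ is the linear isometry of $\mathcal{F}(\mathcal{M})$ with $T_g\delta(m)=\delta(gm)-\delta(g0)$. $\mathcal{M}/G=\{[Gx]:x\in\mathcal{M}\}$ with $[Gx]=\overline{Gx}$, metric $d_{\mathcal{M}/G}([Gx],[Gy])=\inf\{d(x',y'):x'\in[Gx],y'\in[Gy]\}$ (the Hausdorff distance), base point $[G0]$. $\mathrm{Lip}_0^G(\mathcal{M})=\{f\in\mathrm{Lip}_0(\mathcal{M}):f(gx)=f(x)\ \forall g,x\}$. "$Y$ separates the points of $\mathcal{F}(\mathcal{M}/G)$": for every nonzero $\mu\in\mathcal{F}(\mathcal{M}/G)$ some $f\in Y$ has $f(\mu)\ne0$. A bi-invariant mean is a positive normalized linear functional invariant under left and right translations (on bounded uniformly continuous functions for SIN $G$; on $L_\infty(G)$ for locally compact amenable $G$). SIN: every neighborhood $U$ of $e$ contains a neighborhood $V$ of $e$ with $gVg^{-1}=V$ for all $g$. *)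

theory Defs
  imports "HOL-Analysis.Analysis" "HOL-Algebra.Group"
begin

text \<open>Functionals on Lip_0 are represented as maps of type (b => real) => real.
  Since F(N)* = Lip_0(N), the bidual F(N)** is Lip_0(N)*, and kappa is the inclusion
  of F(N) into Lip_0(N)*.\<close>

definition lipconst :: "'b set \<Rightarrow> ('b \<Rightarrow> 'b \<Rightarrow> real) \<Rightarrow> ('b \<Rightarrow> real) \<Rightarrow> real" where
  "lipconst S d f = Sup (insert 0 {\<bar>f x - f y\<bar> / d x y | x y. x \<in> S \<and> y \<in> S \<and> x \<noteq> y})"

definition Lip0 :: "'b set \<Rightarrow> ('b \<Rightarrow> 'b \<Rightarrow> real) \<Rightarrow> 'b \<Rightarrow> ('b \<Rightarrow> real) set" where
  "Lip0 S d p = {f. (\<exists>C. \<forall>x\<in>S. \<forall>y\<in>S. \<bar>f x - f y\<bar> \<le> C * d x y) \<and> f p = 0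
                    \<and> (\<forall>x. x \<notin> S \<longrightarrow> f x = 0)}"

definition LipDual :: "'b set \<Rightarrow> ('b \<Rightarrow> 'b \<Rightarrow> real) \<Rightarrow> 'b \<Rightarrow> (('b \<Rightarrow> real) \<Rightarrow> real) set" where
  "LipDual S d p = {\<phi>.
      (\<forall>f\<in>Lip0 S d p. \<forall>g\<in>Lip0 S d p. \<phi> (\<lambda>x. f x + g x) = \<phi> f + \<phi> g)
    \<and> (\<forall>c. \<forall>f\<in>Lip0 S d p. \<phi> (\<lambda>x. c * f x) = c * \<phi> f)
    \<and> (\<exists>C. \<forall>f\<in>Lip0 S d p. \<bar>\<phi> f\<bar> \<le> C * lipconst S d f)
    \<and> (\<forall>f. f \<notin> Lip0 S d p \<longrightarrow> \<phi> f = 0)}"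

definition fnorm :: "'b set \<Rightarrow> ('b \<Rightarrow> 'b \<Rightarrow> real) \<Rightarrow> 'b \<Rightarrow> (('b \<Rightarrow> real) \<Rightarrow> real) \<Rightarrow> real" where
  "fnorm S d p \<phi> = Sup (insert 0 {\<bar>\<phi> f\<bar> | f. f \<in> Lip0 S d p \<and> lipconst S d f \<le> 1})"

definition delta :: "'b set \<Rightarrow> ('b \<Rightarrow> 'b \<Rightarrow> real) \<Rightarrow> 'b \<Rightarrow> 'b \<Rightarrow> ('b \<Rightarrow> real) \<Rightarrow> real" where
  "delta S d p m = (\<lambda>f. if f \<in> Lip0 S d p then f m else 0)"

definition zerof :: "('b \<Rightarrow> real) \<Rightarrow> real" where
  "zerof = (\<lambda>f. 0)"

definition DeltaSpan :: "'b set \<Rightarrow> ('b \<Rightarrow> 'b \<Rightarrow> real) \<Rightarrow> 'b \<Rightarrow> (('b \<Rightarrow> real) \<Rightarrow> real) set" where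
  "DeltaSpan S d p = {(\<lambda>f. \<Sum>i<n. c i * delta S d p (m i) f) | (n::nat) c m. \<forall>i<n. m i \<in> S}"

definition Free :: "'b set \<Rightarrow> ('b \<Rightarrow> 'b \<Rightarrow> real) \<Rightarrow> 'b \<Rightarrow> (('b \<Rightarrow> real) \<Rightarrow> real) set" where
  "Free S d p = {\<phi> \<in> LipDual S d p. \<forall>e>0. \<exists>\<psi>\<in>DeltaSpan S d p. fnorm S d p (\<lambda>f. \<phi> f - \<psi> f) < e}"

definition preannih :: "'b set \<Rightarrow> ('b \<Rightarrow> 'b \<Rightarrow> real) \<Rightarrow> 'b \<Rightarrow> ('b \<Rightarrow> real) set \<Rightarrow> (('b \<Rightarrow> real) \<Rightarrow> real) set" where
  "preannih S d p A = {\<mu> \<in> Free S d p. \<forall>f\<in>A. \<mu> f = 0}"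

definition lin_on :: "(('b \<Rightarrow> real) \<Rightarrow> real) set \<Rightarrow> ((('b \<Rightarrow> real) \<Rightarrow> real) \<Rightarrow> (('c \<Rightarrow> real) \<Rightarrow> real)) \<Rightarrow> bool" where
  "lin_on D A \<longleftrightarrow> (\<forall>\<phi>\<in>D. \<forall>\<psi>\<in>D. A (\<lambda>f. \<phi> f + \<psi> f) = (\<lambda>f. A \<phi> f + A \<psi> f))
                 \<and> (\<forall>c. \<forall>\<phi>\<in>D. A (\<lambda>f. c * \<phi> f) = (\<lambda>f. c * A \<phi> f))"

text \<open>Operator norm of A on D (meaningful when A is bounded on D).\<close>
definition opnorm_on :: "(('b \<Rightarrow> real) \<Rightarrow> real) set \<Rightarrow> ((('b \<Rightarrow> real) \<Rightarrow> real) \<Rightarrow> real)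
     \<Rightarrow> ((('c \<Rightarrow> real) \<Rightarrow> real) \<Rightarrow> real) \<Rightarrow> ((('b \<Rightarrow> real) \<Rightarrow> real) \<Rightarrow> (('c \<Rightarrow> real) \<Rightarrow> real)) \<Rightarrow> real" where
  "opnorm_on D n1 n2 A = Sup (insert 0 {n2 (A \<phi>) | \<phi>. \<phi> \<in> D \<and> n1 \<phi> \<le> 1})"

definition topological_group :: "'g topology \<Rightarrow> ('g, 'x) monoid_scheme \<Rightarrow> bool" where
  "topological_group \<tau> G \<longleftrightarrow> group G \<and> topspace \<tau> = carrier G
     \<and> continuous_map (prod_topology \<tau> \<tau>) \<tau> (\<lambda>(g, h). g \<otimes>\<^bsub>G\<^esub> h)
     \<and> continuous_map \<tau> \<tau> (\<lambda>g. inv\<^bsub>G\<^esub> g)"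

text \<open>SIN: small invariant neighbourhoods (open neighbourhoods suffice since conjugation is a homeomorphism).\<close>
definition SIN :: "'g topology \<Rightarrow> ('g, 'x) monoid_scheme \<Rightarrow> bool" where
  "SIN \<tau> G \<longleftrightarrow> (\<forall>U. openin \<tau> U \<and> \<one>\<^bsub>G\<^esub> \<in> U \<longrightarrow>
      (\<exists>V. openin \<tau> V \<and> \<one>\<^bsub>G\<^esub> \<in> V \<and> V \<subseteq> U \<and>
           (\<forall>g\<in>carrier G. (\<lambda>v. g \<otimes>\<^bsub>G\<^esub> v \<otimes>\<^bsub>G\<^esub> inv\<^bsub>G\<^esub> g) ` V = V)))"

text \<open>Bounded uniformly continuous real functions on the group (left and right uniformities;
  they coincide for SIN groups).\<close>
definition BUC :: "'g topology \<Rightarrow> ('g, 'x) monoid_scheme \<Rightarrow> ('g \<Rightarrow> real) set" where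
  "BUC \<tau> G = {F. (\<exists>C. \<forall>g\<in>carrier G. \<bar>F g\<bar> \<le> C) \<and>
      (\<forall>e>0. \<exists>U. openin \<tau> U \<and> \<one>\<^bsub>G\<^esub> \<in> U \<and>
         (\<forall>g\<in>carrier G. \<forall>h\<in>U. \<bar>F (g \<otimes>\<^bsub>G\<^esub> h) - F g\<bar> < e \<and> \<bar>F (h \<otimes>\<^bsub>G\<^esub> g) - F g\<bar> < e))}"

definition bi_invariant_mean_BUC :: "'g topology \<Rightarrow> ('g, 'x) monoid_scheme \<Rightarrow> (('g \<Rightarrow> real) \<Rightarrow> real) \<Rightarrow> bool" where
  "bi_invariant_mean_BUC \<tau> G M \<longleftrightarrow>
      (\<forall>F\<in>BUC \<tau> G. \<forall>F'\<in>BUC \<tau> G. (\<forall>g\<in>carrier G. F g = F' g) \<longrightarrow> M F = M F')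
    \<and> (\<forall>F\<in>BUC \<tau> G. \<forall>F'\<in>BUC \<tau> G. M (\<lambda>g. F g + F' g) = M F + M F')
    \<and> (\<forall>c. \<forall>F\<in>BUC \<tau> G. M (\<lambda>g. c * F g) = c * M F)
    \<and> (\<forall>F\<in>BUC \<tau> G. (\<forall>g\<in>carrier G. F g \<ge> 0) \<longrightarrow> M F \<ge> 0)
    \<and> M (\<lambda>g. 1) = 1
    \<and> (\<forall>F\<in>BUC \<tau> G. \<forall>h\<in>carrier G.
          M (\<lambda>g. F (h \<otimes>\<^bsub>G\<^esub> g)) = M F \<and> M (\<lambda>g. F (g \<otimes>\<^bsub>G\<^esub> h)) = M F)"

definition left_haar_measure :: "'g topology \<Rightarrow> ('g, 'x) monoid_scheme \<Rightarrow> 'g measure \<Rightarrow> bool" where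
  "left_haar_measure \<tau> G H \<longleftrightarrow>
      space H = topspace \<tau>
    \<and> sets H = sigma_sets (topspace \<tau>) {U. openin \<tau> U}
    \<and> (\<forall>g\<in>carrier G. \<forall>A\<in>sets H. emeasure H ((\<lambda>x. g \<otimes>\<^bsub>G\<^esub> x) ` A) = emeasure H A)
    \<and> (\<forall>K. compactin \<tau> K \<longrightarrow> emeasure H K < \<infinity>)
    \<and> (\<forall>U. openin \<tau> U \<and> U \<noteq> {} \<longrightarrow> emeasure H U > 0)
    \<and> (\<forall>A\<in>sets H. emeasure H A = (INF U\<in>{U. openin \<tau> U \<and> A \<subseteq> U}. emeasure H U))
    \<and> (\<forall>U. openin \<tau> U \<longrightarrow> emeasure H U = (SUP K\<in>{K. compactin \<tau> K \<and> K \<subseteq> U}. emeasure H K))"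

text \<open>L_infty(G) represented by essentially bounded measurable functions; the mean must respect
  equality almost everywhere, hence is a functional on L_infty(G).\<close>
definition Linf :: "'g measure \<Rightarrow> ('g \<Rightarrow> real) set" where
  "Linf H = {F. F \<in> borel_measurable H \<and> (\<exists>C. AE g in H. \<bar>F g\<bar> \<le> C)}"

definition bi_invariant_mean_Linf :: "('g, 'x) monoid_scheme \<Rightarrow> 'g measure \<Rightarrow> (('g \<Rightarrow> real) \<Rightarrow> real) \<Rightarrow> bool" where
  "bi_invariant_mean_Linf G H M \<longleftrightarrow>
      (\<forall>F\<in>Linf H. \<forall>F'\<in>Linf H. (AE g in H. F g = F' g) \<longrightarrow> M F = M F')
    \<and> (\<forall>F\<in>Linf H. \<forall>F'\<in>Linf H. M (\<lambda>g. F g + F' g) = M F + M F')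
    \<and> (\<forall>c. \<forall>F\<in>Linf H. M (\<lambda>g. c * F g) = c * M F)
    \<and> (\<forall>F\<in>Linf H. (AE g in H. F g \<ge> 0) \<longrightarrow> M F \<ge> 0)
    \<and> M (\<lambda>g. 1) = 1
    \<and> (\<forall>F\<in>Linf H. \<forall>h\<in>carrier G.
          M (\<lambda>g. F (h \<otimes>\<^bsub>G\<^esub> g)) = M F \<and> M (\<lambda>g. F (g \<otimes>\<^bsub>G\<^esub> h)) = M F)"

definition isometric_action :: "'g topology \<Rightarrow> ('g, 'x) monoid_scheme \<Rightarrow> ('g \<Rightarrow> 'a::metric_space \<Rightarrow> 'a) \<Rightarrow> bool" where
  "isometric_action \<tau> G act \<longleftrightarrow>
      (\<forall>x. act \<one>\<^bsub>G\<^esub> x = x)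
    \<and> (\<forall>g\<in>carrier G. \<forall>h\<in>carrier G. \<forall>x. act (g \<otimes>\<^bsub>G\<^esub> h) x = act g (act h x))
    \<and> (\<forall>g\<in>carrier G. \<forall>x y. dist (act g x) (act g y) = dist x y)
    \<and> continuous_map (prod_topology \<tau> euclidean) euclidean (\<lambda>(g, x). act g x)"

definition orbcl :: "('g, 'x) monoid_scheme \<Rightarrow> ('g \<Rightarrow> 'a::metric_space \<Rightarrow> 'a) \<Rightarrow> 'a \<Rightarrow> 'a set" where
  "orbcl G act x = closure ((\<lambda>g. act g x) ` carrier G)"

definition quot_space :: "('g, 'x) monoid_scheme \<Rightarrow> ('g \<Rightarrow> 'a::metric_space \<Rightarrow> 'a) \<Rightarrow> 'a set set" where
  "quot_space G act = range (orbcl G act)"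

definition quot_dist :: "'a::metric_space set \<Rightarrow> 'a set \<Rightarrow> real" where
  "quot_dist A B = Inf {dist x y | x y. x \<in> A \<and> y \<in> B}"

abbreviation LipM :: "'a::metric_space \<Rightarrow> ('a \<Rightarrow> real) set" where
  "LipM z0 \<equiv> Lip0 UNIV dist z0"

definition Lip0G :: "('g, 'x) monoid_scheme \<Rightarrow> ('g \<Rightarrow> 'a::metric_space \<Rightarrow> 'a) \<Rightarrow> 'a \<Rightarrow> ('a \<Rightarrow> real) set" where
  "Lip0G G act z0 = {f \<in> Lip0 UNIV dist z0. \<forall>g\<in>carrier G. \<forall>x. f (act g x) = f x}"

text \<open>The bidual operator T_g** on F(M)** = Lip_0(M)*: (T_g** phi)(f) = phi(T_g* f), where
  (T_g* f)(m) = f(g m) - f(g 0). On F(M) it restricts to T_g (T_g delta(m) = delta(gm) - delta(g0)).\<close>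
definition Tgdd :: "('g \<Rightarrow> 'a::metric_space \<Rightarrow> 'a) \<Rightarrow> 'a \<Rightarrow> 'g \<Rightarrow> (('a \<Rightarrow> real) \<Rightarrow> real) \<Rightarrow> (('a \<Rightarrow> real) \<Rightarrow> real)" where
  "Tgdd act z0 g \<phi> = (\<lambda>f. if f \<in> Lip0 UNIV dist z0 then \<phi> (\<lambda>m. f (act g m) - f (act g z0)) else 0)"

definition RG :: "('g \<Rightarrow> 'a::metric_space \<Rightarrow> 'a) \<Rightarrow> 'a \<Rightarrow> (('g \<Rightarrow> real) \<Rightarrow> real) \<Rightarrow> (('a \<Rightarrow> real) \<Rightarrow> real) \<Rightarrow> (('a \<Rightarrow> real) \<Rightarrow> real)" where
  "RG act z0 M \<mu> = (\<lambda>f. if f \<in> Lip0 UNIV dist z0 then M (\<lambda>g. Tgdd act z0 g \<mu> f) else 0)"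

text \<open>P_G = kappa^{-1} o Q o R_G (kappa is the inclusion F(M) into Lip_0(M)*).\<close>
definition PG :: "('g \<Rightarrow> 'a::metric_space \<Rightarrow> 'a) \<Rightarrow> 'a \<Rightarrow> (('g \<Rightarrow> real) \<Rightarrow> real)
      \<Rightarrow> ((('a \<Rightarrow> real) \<Rightarrow> real) \<Rightarrow> (('a \<Rightarrow> real) \<Rightarrow> real)) \<Rightarrow> (('a \<Rightarrow> real) \<Rightarrow> real) \<Rightarrow> (('a \<Rightarrow> real) \<Rightarrow> real)" where
  "PG act z0 M Q \<mu> = Q (RG act z0 M \<mu>)"

definition Psi :: "('g, 'x) monoid_scheme \<Rightarrow> ('g \<Rightarrow> 'a::metric_space \<Rightarrow> 'a) \<Rightarrow> ('a set \<Rightarrow> real) \<Rightarrow> ('a \<Rightarrow> real)" where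
  "Psi G act f = (\<lambda>x. f (orbcl G act x))"

end

theory Submission
  imports Defs
begin

text \<open>Averaging over the orbits with the mean, avg f x = M(g |-> f(gx)) - M(g |-> f(g0)), is a
  norm-one projection of Lip0(M) onto the G-invariant functions; being invariant and continuous,
  avg f is constant on orbit closures, so it factors through Lip0(M/G). Dually this gives
  R_G(mu) = Phi(S mu), where Phi (avg_op) is the adjoint of the factorization and S (quot_op) the
  predual of Psi, hence P_G = T o S with T = Q o Phi (lift_op). Since Phi(nu) is invariant and
  ker Q is invariant under every T_g**, also T(nu) is invariant, so P_G fixes the range of T; this
  yields the projection properties, the range of P_G and the bound on T. Finally S o T = id: for
  nu = S mu in the span of the deltas, mu - P_G mu lies in ker P_G and so annihilates Psi(Y), whence
  nu and S(T nu) agree on Y; by density this holds for all nu, and Y separates points. The kernel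
  of P_G is then the kernel of S, which is the annihilator of Lip0^G(M).\<close>

section \<open>Lipschitz functions and their dual over a pointed space\<close>

locale pointed_space =
  fixes S :: "'b set" and d :: "'b \<Rightarrow> 'b \<Rightarrow> real" and p :: 'b
  assumes dist_nonneg: "\<And>x y. x \<in> S \<Longrightarrow> y \<in> S \<Longrightarrow> d x y \<ge> 0"
    and base_in: "p \<in> S"
begin

abbreviation "L0 \<equiv> Lip0 S d p"
abbreviation "LD \<equiv> LipDual S d p"
abbreviation "lc \<equiv> lipconst S d"
abbreviation "fn \<equiv> fnorm S d p"
abbreviation "DS \<equiv> DeltaSpan S d p"
abbreviation "FS \<equiv> Free S d p"

lemma Lip0_lipschitzE:
  assumes "f \<in> L0"
  obtains C where "\<And>x y. x \<in> S \<Longrightarrow> y \<in> S \<Longrightarrow> \<bar>f x - f y\<bar> \<le> C * d x y"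
  using assms by (auto simp: Lip0_def)

lemma quotients_le_lipschitz_const:
  assumes "\<And>x y. x \<in> S \<Longrightarrow> y \<in> S \<Longrightarrow> \<bar>f x - f y\<bar> \<le> L * d x y" "L \<ge> 0"
    and "z \<in> insert 0 {\<bar>f x - f y\<bar> / d x y | x y. x \<in> S \<and> y \<in> S \<and> x \<noteq> y}"
  shows "z \<le> L"
  using assms dist_nonneg by (force simp: divide_le_eq)

lemma lipconst_bdd_above:
  assumes "f \<in> L0"
  shows "bdd_above (insert 0 {\<bar>f x - f y\<bar> / d x y | x y. x \<in> S \<and> y \<in> S \<and> x \<noteq> y})"
proof -
  obtain C where C: "\<And>x y. x \<in> S \<Longrightarrow> y \<in> S \<Longrightarrow> \<bar>f x - f y\<bar> \<le> C * d x y"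
    using Lip0_lipschitzE[OF assms] by blast
  have "\<bar>f x - f y\<bar> \<le> \<bar>C\<bar> * d x y" if "x \<in> S" "y \<in> S" for x y
    using C[OF that] dist_nonneg[OF that] by (smt (verit) mult_right_mono abs_ge_self)
  then show ?thesis
    by (intro bdd_aboveI) (rule quotients_le_lipschitz_const[rotated 2], auto)
qed

lemma lipconst_nonneg: "f \<in> L0 \<Longrightarrow> lc f \<ge> 0"
  unfolding lipconst_def by (rule cSup_upper[OF _ lipconst_bdd_above]) auto

lemma lipconst_leI:
  assumes "L \<ge> 0" "\<And>x y. x \<in> S \<Longrightarrow> y \<in> S \<Longrightarrow> \<bar>f x - f y\<bar> \<le> L * d x y"
  shows "lc f \<le> L"
  unfolding lipconst_def
  by (rule cSup_least) (auto intro: quotients_le_lipschitz_const[OF assms(2,1)])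

lemma lipconst_bound:
  assumes "f \<in> L0" "x \<in> S" "y \<in> S"
  shows "\<bar>f x - f y\<bar> \<le> lc f * d x y"
proof (cases "x = y \<or> d x y = 0")
  case True
  obtain C where "\<And>x y. x \<in> S \<Longrightarrow> y \<in> S \<Longrightarrow> \<bar>f x - f y\<bar> \<le> C * d x y"
    using Lip0_lipschitzE[OF assms(1)] by blast
  then have "\<bar>f x - f y\<bar> = 0" using True assms(2,3) by force
  then show ?thesis using lipconst_nonneg[OF assms(1)] dist_nonneg[OF assms(2,3)] by simp
next
  case False
  then have "d x y > 0" using dist_nonneg assms by force
  moreover have "\<bar>f x - f y\<bar> / d x y \<le> lc f" unfolding lipconst_def
    by (rule cSup_upper[OF _ lipconst_bdd_above[OF assms(1)]]) (use assms False in auto)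
  ultimately show ?thesis by (simp add: divide_le_eq mult.commute)
qed

lemma Lip0_add: "f \<in> L0 \<Longrightarrow> g \<in> L0 \<Longrightarrow> (\<lambda>x. f x + g x) \<in> L0"
proof -
  assume f: "f \<in> L0" and g: "g \<in> L0"
  have "\<bar>(f x + g x) - (f y + g y)\<bar> \<le> (lc f + lc g) * d x y" if "x \<in> S" "y \<in> S" for x y
    using lipconst_bound[OF f that] lipconst_bound[OF g that] by (simp add: algebra_simps abs_triangle_ineq[THEN order_trans])
  then show ?thesis using f g by (auto simp: Lip0_def)
qed

lemma lipschitz_scale:
  assumes "f \<in> L0" "x \<in> S" "y \<in> S"
  shows "\<bar>c * f x - c * f y\<bar> \<le> (\<bar>c\<bar> * lc f) * d x y"
proof -
  have "\<bar>c * f x - c * f y\<bar> = \<bar>c\<bar> * \<bar>f x - f y\<bar>" by (simp add: abs_mult[symmetric] algebra_simps)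
  also have "\<dots> \<le> \<bar>c\<bar> * (lc f * d x y)" using lipconst_bound[OF assms] by (simp add: mult_left_mono)
  finally show ?thesis by simp
qed

lemma Lip0_scale: "f \<in> L0 \<Longrightarrow> (\<lambda>x. c * f x) \<in> L0"
proof -
  assume f: "f \<in> L0"
  then have "\<bar>c * f x - c * f y\<bar> \<le> (\<bar>c\<bar> * lc f) * d x y" if "x \<in> S" "y \<in> S" for x y
    using lipschitz_scale that by blast
  then show ?thesis using f by (auto simp: Lip0_def)
qed

lemma lipconst_scale_le: "f \<in> L0 \<Longrightarrow> lc (\<lambda>x. c * f x) \<le> \<bar>c\<bar> * lc f"
  by (rule lipconst_leI) (auto simp: lipschitz_scale lipconst_nonneg)

lemma Lip0_lipconst_eq_0:
  assumes "f \<in> L0" "lc f = 0" shows "f = (\<lambda>x. 0)"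
proof
  fix x show "f x = 0"
    using assms lipconst_bound[OF assms(1) _ base_in, of x] by (cases "x \<in> S") (auto simp: Lip0_def)
qed

lemma Lip0_zero: "(\<lambda>x. 0) \<in> L0"
  using base_in by (auto simp: Lip0_def intro: exI[of _ 0])

lemma LipDual_additive: "\<phi> \<in> LD \<Longrightarrow> f \<in> L0 \<Longrightarrow> g \<in> L0 \<Longrightarrow> \<phi> (\<lambda>x. f x + g x) = \<phi> f + \<phi> g"
  unfolding LipDual_def by blast

lemma LipDual_homogeneous: "\<phi> \<in> LD \<Longrightarrow> f \<in> L0 \<Longrightarrow> \<phi> (\<lambda>x. c * f x) = c * \<phi> f"
  unfolding LipDual_def by blast

lemma LipDual_outside: "\<phi> \<in> LD \<Longrightarrow> f \<notin> L0 \<Longrightarrow> \<phi> f = 0"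
  unfolding LipDual_def by blast

lemma LipDual_zero_fun: "\<phi> \<in> LD \<Longrightarrow> \<phi> (\<lambda>x. 0) = 0"
  using LipDual_homogeneous[OF _ Lip0_zero, of \<phi> 0] by simp

lemma fnorm_bdd_above:
  assumes "\<phi> \<in> LD"
  shows "bdd_above (insert 0 {\<bar>\<phi> f\<bar> | f. f \<in> L0 \<and> lc f \<le> 1})"
proof -
  obtain C where C: "\<forall>f\<in>L0. \<bar>\<phi> f\<bar> \<le> C * lc f" using assms by (auto simp: LipDual_def)
  have "\<bar>\<phi> f\<bar> \<le> \<bar>C\<bar>" if "f \<in> L0" "lc f \<le> 1" for f
    using C that lipconst_nonneg[OF that(1)]
    by (smt (verit) mult_left_le mult_nonneg_nonneg mult_nonpos_nonneg abs_ge_self abs_mult)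
  then show ?thesis by (intro bdd_aboveI[of _ "\<bar>C\<bar>"]) auto
qed

lemma fnorm_nonneg: "\<phi> \<in> LD \<Longrightarrow> fn \<phi> \<ge> 0"
  unfolding fnorm_def by (rule cSup_upper[OF _ fnorm_bdd_above]) auto

lemma fnorm_ge: "\<phi> \<in> LD \<Longrightarrow> f \<in> L0 \<Longrightarrow> lc f \<le> 1 \<Longrightarrow> \<bar>\<phi> f\<bar> \<le> fn \<phi>"
  unfolding fnorm_def by (rule cSup_upper[OF _ fnorm_bdd_above]) auto

lemma fnorm_leI:
  assumes "K \<ge> 0" "\<And>f. f \<in> L0 \<Longrightarrow> lc f \<le> 1 \<Longrightarrow> \<bar>\<phi> f\<bar> \<le> K"
  shows "fn \<phi> \<le> K"
  unfolding fnorm_def by (rule cSup_least) (use assms in auto)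

lemma fnorm_bound:
  assumes phi: "\<phi> \<in> LD" and f: "f \<in> L0"
  shows "\<bar>\<phi> f\<bar> \<le> fn \<phi> * lc f"
proof (cases "lc f = 0")
  case True
  then show ?thesis using Lip0_lipconst_eq_0[OF f] LipDual_zero_fun[OF phi] by simp
next
  case False
  then have pos: "lc f > 0" using lipconst_nonneg[OF f] by simp
  have "lc (\<lambda>x. (1 / lc f) * f x) \<le> 1"
    using lipconst_scale_le[OF f, of "1 / lc f"] pos by simp
  then have "\<bar>\<phi> (\<lambda>x. (1 / lc f) * f x)\<bar> \<le> fn \<phi>" by (rule fnorm_ge[OF phi Lip0_scale[OF f]])
  then have "\<bar>\<phi> f\<bar> / lc f \<le> fn \<phi>"
    using pos by (simp only: LipDual_homogeneous[OF phi f]) (simp add: abs_mult)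
  then show ?thesis using pos by (simp add: divide_le_eq)
qed

lemma LipDual_fnorm_leI:
  assumes add: "\<And>f g. f \<in> L0 \<Longrightarrow> g \<in> L0 \<Longrightarrow> \<phi> (\<lambda>x. f x + g x) = \<phi> f + \<phi> g"
    and scale: "\<And>c f. f \<in> L0 \<Longrightarrow> \<phi> (\<lambda>x. c * f x) = c * \<phi> f"
    and outside: "\<And>f. f \<notin> L0 \<Longrightarrow> \<phi> f = 0"
    and bound: "\<And>f. f \<in> L0 \<Longrightarrow> \<bar>\<phi> f\<bar> \<le> C * lc f" and C: "C \<ge> 0"
  shows "\<phi> \<in> LD" "fn \<phi> \<le> C"
proof -
  show "\<phi> \<in> LD" unfolding LipDual_def using add scale outside bound by blast
  show "fn \<phi> \<le> C"
    using C bound by (intro fnorm_leI) (auto intro: order_trans mult_left_le)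
qed

lemma LipDual_add: "\<phi> \<in> LD \<Longrightarrow> \<psi> \<in> LD \<Longrightarrow> (\<lambda>f. \<phi> f + \<psi> f) \<in> LD"
proof -
  assume phi: "\<phi> \<in> LD" and psi: "\<psi> \<in> LD"
  have "\<bar>\<phi> f + \<psi> f\<bar> \<le> (fn \<phi> + fn \<psi>) * lc f" if "f \<in> L0" for f
    using fnorm_bound[OF phi that] fnorm_bound[OF psi that] by (simp add: algebra_simps)
  then show ?thesis
    using phi psi fnorm_nonneg
    by (intro LipDual_fnorm_leI(1)[where C = "fn \<phi> + fn \<psi>"]) (auto simp: LipDual_additive LipDual_homogeneous LipDual_outside
        algebra_simps)
qed

lemma LipDual_scale: "\<phi> \<in> LD \<Longrightarrow> (\<lambda>f. c * \<phi> f) \<in> LD"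
proof -
  assume phi: "\<phi> \<in> LD"
  have "\<bar>c * \<phi> f\<bar> \<le> (\<bar>c\<bar> * fn \<phi>) * lc f" if "f \<in> L0" for f
    using mult_left_mono[OF fnorm_bound[OF phi that], of "\<bar>c\<bar>"] by (simp add: abs_mult mult.assoc)
  then show ?thesis
    using phi fnorm_nonneg
    by (intro LipDual_fnorm_leI(1)[where C = "\<bar>c\<bar> * fn \<phi>"]) (auto simp: LipDual_additive LipDual_homogeneous LipDual_outside
        algebra_simps)
qed

lemma LipDual_diff: "\<phi> \<in> LD \<Longrightarrow> \<psi> \<in> LD \<Longrightarrow> (\<lambda>f. \<phi> f - \<psi> f) \<in> LD"
  using LipDual_add[OF _ LipDual_scale[of \<psi> "-1"], of \<phi>] by simp

lemma zerof_LipDual: "zerof \<in> LD"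
  unfolding LipDual_def zerof_def by (auto intro: exI[of _ 0])

lemma fnorm_triangle: "\<phi> \<in> LD \<Longrightarrow> \<psi> \<in> LD \<Longrightarrow> fn (\<lambda>f. \<phi> f + \<psi> f) \<le> fn \<phi> + fn \<psi>"
  by (rule fnorm_leI) (auto simp: fnorm_nonneg intro: abs_triangle_ineq[THEN order_trans] add_mono fnorm_ge)

lemma fnorm_scale_le: "\<phi> \<in> LD \<Longrightarrow> fn (\<lambda>f. c * \<phi> f) \<le> \<bar>c\<bar> * fn \<phi>"
  by (rule fnorm_leI) (auto simp: fnorm_nonneg abs_mult intro: mult_left_mono fnorm_ge)

lemma fnorm_diff_commute: "fn (\<lambda>f. \<phi> f - \<psi> f) = fn (\<lambda>f. \<psi> f - \<phi> f)"
  unfolding fnorm_def by (simp add: abs_minus_commute)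

lemma fnorm_zerof: "fn zerof = 0"
  using fnorm_leI[of 0 zerof] fnorm_nonneg[OF zerof_LipDual] by (simp add: zerof_def)

lemma fnorm_eq_0D:
  assumes "\<phi> \<in> LD" "fn \<phi> = 0" shows "\<phi> = zerof"
proof
  fix f show "\<phi> f = zerof f"
    using fnorm_bound[OF assms(1), of f] assms LipDual_outside[OF assms(1), of f]
    by (cases "f \<in> L0") (auto simp: zerof_def)
qed

lemma delta_apply: "f \<in> L0 \<Longrightarrow> delta S d p m f = f m"
  by (simp add: delta_def)

lemma DeltaSpan_iff:
  "\<psi> \<in> DS \<longleftrightarrow> (\<exists>(n::nat) c m. \<psi> = (\<lambda>f. \<Sum>i<n. c i * delta S d p (m i) f) \<and> (\<forall>i<n. m i \<in> S))"
  unfolding DeltaSpan_def by auto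

lemma DeltaSpan_LipDual: "\<psi> \<in> DS \<Longrightarrow> \<psi> \<in> LD"
proof -
  assume "\<psi> \<in> DS"
  then obtain n :: nat and c m where psi: "\<psi> = (\<lambda>f. \<Sum>i<n. c i * delta S d p (m i) f)"
    and m: "\<forall>i<n. m i \<in> S"
    unfolding DeltaSpan_iff by blast
  have bound: "\<bar>\<psi> f\<bar> \<le> (\<Sum>i<n. \<bar>c i\<bar> * d (m i) p) * lc f" if f: "f \<in> L0" for f
  proof -
    have "\<psi> f = (\<Sum>i<n. c i * (f (m i) - f p))" using f by (simp add: psi delta_apply Lip0_def)
    also have "\<bar>\<dots>\<bar> \<le> (\<Sum>i<n. \<bar>c i * (f (m i) - f p)\<bar>)" by (rule sum_abs)
    also have "\<dots> \<le> (\<Sum>i<n. \<bar>c i\<bar> * d (m i) p * lc f)"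
    proof (rule sum_mono)
      fix i assume "i \<in> {..<n}"
      then have "\<bar>f (m i) - f p\<bar> \<le> lc f * d (m i) p" using lipconst_bound[OF f _ base_in] m by auto
      then show "\<bar>c i * (f (m i) - f p)\<bar> \<le> \<bar>c i\<bar> * d (m i) p * lc f"
        by (simp add: abs_mult mult_left_mono mult.assoc mult.commute[of "lc f"])
    qed
    also have "\<dots> = (\<Sum>i<n. \<bar>c i\<bar> * d (m i) p) * lc f" by (simp add: sum_distrib_right)
    finally show ?thesis .
  qed
  have "(\<Sum>i<n. \<bar>c i\<bar> * d (m i) p) \<ge> 0"
    using m dist_nonneg base_in by (intro sum_nonneg) simp
  then show ?thesis
    using Lip0_add Lip0_scale bound
    by (intro LipDual_fnorm_leI(1))
      (auto simp: psi delta_apply sum.distrib sum_distrib_left algebra_simps delta_def)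
qed

lemma DeltaSpan_Free: "\<psi> \<in> DS \<Longrightarrow> \<psi> \<in> FS"
  unfolding Free_def using DeltaSpan_LipDual fnorm_zerof by (auto simp: zerof_def intro!: bexI[of _ \<psi>])

lemma delta_DeltaSpan: "m \<in> S \<Longrightarrow> delta S d p m \<in> DS"
  unfolding DeltaSpan_iff by (intro exI[of _ 1] exI[of _ "\<lambda>i. 1"] exI[of _ "\<lambda>i. m"]) auto

lemma delta_Free: "m \<in> S \<Longrightarrow> delta S d p m \<in> FS"
  using DeltaSpan_Free delta_DeltaSpan by blast

lemma DeltaSpan_add: "\<phi> \<in> DS \<Longrightarrow> \<psi> \<in> DS \<Longrightarrow> (\<lambda>f. \<phi> f + \<psi> f) \<in> DS"
proof -
  assume "\<phi> \<in> DS" "\<psi> \<in> DS"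
  then obtain n n' :: nat and c m c' m' where
    phi: "\<phi> = (\<lambda>f. \<Sum>i<n. c i * delta S d p (m i) f)" and m: "\<forall>i<n. m i \<in> S" and
    psi: "\<psi> = (\<lambda>f. \<Sum>i<n'. c' i * delta S d p (m' i) f)" and m': "\<forall>i<n'. m' i \<in> S"
    unfolding DeltaSpan_iff by blast
  define C where "C = (\<lambda>i. if i < n then c i else c' (i - n))"
  define N where "N = (\<lambda>i. if i < n then m i else m' (i - n))"
  have split: "(\<Sum>i<n+k. F i) = (\<Sum>i<n. F i) + (\<Sum>i<k. F (n+i))" for k and F :: "nat \<Rightarrow> real"
    by (induct k) auto
  have "(\<lambda>f. \<phi> f + \<psi> f) = (\<lambda>f. \<Sum>i<n+n'. C i * delta S d p (N i) f)"
    by (simp add: split phi psi C_def N_def)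
  moreover have "\<forall>i<n+n'. N i \<in> S" using m m' by (auto simp: N_def)
  ultimately show ?thesis unfolding DeltaSpan_iff by blast
qed

lemma DeltaSpan_scale: "\<phi> \<in> DS \<Longrightarrow> (\<lambda>f. a * \<phi> f) \<in> DS"
  unfolding DeltaSpan_iff
  by (elim exE conjE, rule_tac x=n in exI, rule_tac x="\<lambda>i. a * c i" in exI, rule_tac x=m in exI)
    (simp add: sum_distrib_left mult.assoc)

lemma Free_LipDual: "\<phi> \<in> FS \<Longrightarrow> \<phi> \<in> LD"
  by (simp add: Free_def)

lemma Free_approx: "\<phi> \<in> FS \<Longrightarrow> e > 0 \<Longrightarrow> \<exists>\<psi>\<in>DS. fn (\<lambda>f. \<phi> f - \<psi> f) < e"
  by (simp add: Free_def)

lemma Free_add: "\<phi> \<in> FS \<Longrightarrow> \<psi> \<in> FS \<Longrightarrow> (\<lambda>f. \<phi> f + \<psi> f) \<in> FS"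
proof -
  assume a: "\<phi> \<in> FS" "\<psi> \<in> FS"
  have "\<exists>\<xi>\<in>DS. fn (\<lambda>f. (\<phi> f + \<psi> f) - \<xi> f) < e" if e: "e > 0" for e
  proof -
    obtain a1 where a1: "a1 \<in> DS" "fn (\<lambda>f. \<phi> f - a1 f) < e/2"
      using Free_approx[OF a(1), of "e/2"] e by auto
    obtain a2 where a2: "a2 \<in> DS" "fn (\<lambda>f. \<psi> f - a2 f) < e/2"
      using Free_approx[OF a(2), of "e/2"] e by auto
    have "fn (\<lambda>f. (\<phi> f - a1 f) + (\<psi> f - a2 f)) \<le> fn (\<lambda>f. \<phi> f - a1 f) + fn (\<lambda>f. \<psi> f - a2 f)"
      using a a1 a2 by (intro fnorm_triangle LipDual_diff) (auto simp: DeltaSpan_LipDual Free_LipDual)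
    then show ?thesis using a1 a2 DeltaSpan_add[OF a1(1) a2(1)]
      by (intro bexI[of _ "\<lambda>f. a1 f + a2 f"]) (auto simp: algebra_simps)
  qed
  moreover have "(\<lambda>f. \<phi> f + \<psi> f) \<in> LD" using a by (intro LipDual_add) (auto simp: Free_LipDual)
  ultimately show ?thesis unfolding Free_def by blast
qed

lemma Free_scale: "\<phi> \<in> FS \<Longrightarrow> (\<lambda>f. a * \<phi> f) \<in> FS"
proof -
  assume a: "\<phi> \<in> FS"
  have "\<exists>\<xi>\<in>DS. fn (\<lambda>f. a * \<phi> f - \<xi> f) < e" if e: "e > 0" for e
  proof -
    obtain a1 where a1: "a1 \<in> DS" "fn (\<lambda>f. \<phi> f - a1 f) < e/(\<bar>a\<bar>+1)"
      using Free_approx[OF a, of "e/(\<bar>a\<bar>+1)"] e by auto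
    have "fn (\<lambda>f. a * (\<phi> f - a1 f)) \<le> \<bar>a\<bar> * fn (\<lambda>f. \<phi> f - a1 f)"
      using a a1 by (intro fnorm_scale_le LipDual_diff) (auto simp: DeltaSpan_LipDual Free_LipDual)
    also have "\<dots> \<le> \<bar>a\<bar> * (e/(\<bar>a\<bar>+1))" using a1(2) by (intro mult_left_mono) auto
    also have "\<dots> < e" using e by (simp add: field_simps)
    finally show ?thesis using DeltaSpan_scale[OF a1(1)]
      by (intro bexI[of _ "\<lambda>f. a * a1 f"]) (auto simp: algebra_simps)
  qed
  moreover have "(\<lambda>f. a * \<phi> f) \<in> LD" using a by (intro LipDual_scale) (auto simp: Free_LipDual)
  ultimately show ?thesis unfolding Free_def by blast
qed

lemma Free_diff: "\<phi> \<in> FS \<Longrightarrow> \<psi> \<in> FS \<Longrightarrow> (\<lambda>f. \<phi> f - \<psi> f) \<in> FS"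
  using Free_add[OF _ Free_scale[of \<psi> "-1"], of \<phi>] by simp

end

lemma pointed_space_metric: "pointed_space (UNIV::'a::metric_space set) dist z0"
  by unfold_locales auto

section \<open>Adjoints of nonexpansive maps between Lipschitz spaces\<close>

definition lip_adjoint :: "'b set \<Rightarrow> ('b \<Rightarrow> 'b \<Rightarrow> real) \<Rightarrow> 'b \<Rightarrow> (('b \<Rightarrow> real) \<Rightarrow> ('c \<Rightarrow> real))
    \<Rightarrow> (('c \<Rightarrow> real) \<Rightarrow> real) \<Rightarrow> (('b \<Rightarrow> real) \<Rightarrow> real)" where
  "lip_adjoint S d p U \<phi> = (\<lambda>f. if f \<in> Lip0 S d p then \<phi> (U f) else 0)"

locale nonexpansive_lip_map = src: pointed_space S d p + tgt: pointed_space S' d' p'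
  for S :: "'b set" and d p and S' :: "'c set" and d' p' +
  fixes U :: "('b \<Rightarrow> real) \<Rightarrow> ('c \<Rightarrow> real)"
  assumes maps_Lip0: "\<And>f. f \<in> Lip0 S d p \<Longrightarrow> U f \<in> Lip0 S' d' p'"
    and additive: "\<And>f g. f \<in> Lip0 S d p \<Longrightarrow> g \<in> Lip0 S d p \<Longrightarrow>
                     U (\<lambda>x. f x + g x) = (\<lambda>x. U f x + U g x)"
    and homogeneous: "\<And>c f. f \<in> Lip0 S d p \<Longrightarrow> U (\<lambda>x. c * f x) = (\<lambda>x. c * U f x)"
    and nonexpansive: "\<And>f. f \<in> Lip0 S d p \<Longrightarrow> lipconst S' d' (U f) \<le> lipconst S d f"
begin

abbreviation "adj \<equiv> lip_adjoint S d p U"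

lemma adjoint_apply: "f \<in> src.L0 \<Longrightarrow> adj \<phi> f = \<phi> (U f)"
  by (simp add: lip_adjoint_def)

lemma adjoint_outside: "f \<notin> src.L0 \<Longrightarrow> adj \<phi> f = 0"
  by (simp add: lip_adjoint_def)

lemma adjoint_bound:
  assumes phi: "\<phi> \<in> tgt.LD" and f: "f \<in> src.L0"
  shows "\<bar>adj \<phi> f\<bar> \<le> tgt.fn \<phi> * src.lc f"
proof -
  have "\<bar>adj \<phi> f\<bar> \<le> tgt.fn \<phi> * tgt.lc (U f)"
    using tgt.fnorm_bound[OF phi maps_Lip0[OF f]] f by (simp add: adjoint_apply)
  also have "\<dots> \<le> tgt.fn \<phi> * src.lc f"
    by (rule mult_left_mono[OF nonexpansive[OF f] tgt.fnorm_nonneg[OF phi]])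
  finally show ?thesis .
qed

lemma adjoint_LipDual:
  assumes phi: "\<phi> \<in> tgt.LD"
  shows "adj \<phi> \<in> src.LD" "src.fn (adj \<phi>) \<le> tgt.fn \<phi>"
  using src.LipDual_fnorm_leI[of "adj \<phi>", OF _ _ _ adjoint_bound[OF phi] tgt.fnorm_nonneg[OF phi]]
    src.Lip0_add src.Lip0_scale maps_Lip0
  by (auto simp: adjoint_apply adjoint_outside additive homogeneous
      tgt.LipDual_additive[OF phi] tgt.LipDual_homogeneous[OF phi])

lemma adjoint_add: "adj (\<lambda>h. \<phi> h + \<psi> h) = (\<lambda>f. adj \<phi> f + adj \<psi> f)"
  by (auto simp: lip_adjoint_def)

lemma adjoint_scale: "adj (\<lambda>h. c * \<phi> h) = (\<lambda>f. c * adj \<phi> f)"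
  by (auto simp: lip_adjoint_def)

lemma adjoint_diff: "adj (\<lambda>h. \<phi> h - \<psi> h) = (\<lambda>f. adj \<phi> f - adj \<psi> f)"
  by (auto simp: lip_adjoint_def)

lemma adjoint_Free:
  assumes span: "\<And>\<psi>. \<psi> \<in> tgt.DS \<Longrightarrow> adj \<psi> \<in> src.DS" and phi: "\<phi> \<in> tgt.FS"
  shows "adj \<phi> \<in> src.FS"
proof -
  have "\<exists>\<xi>\<in>src.DS. src.fn (\<lambda>f. adj \<phi> f - \<xi> f) < e" if e: "e > 0" for e
  proof -
    obtain \<psi> where psi: "\<psi> \<in> tgt.DS" "tgt.fn (\<lambda>h. \<phi> h - \<psi> h) < e"
      using tgt.Free_approx[OF phi e] by blast
    have diff: "(\<lambda>h. \<phi> h - \<psi> h) \<in> tgt.LD"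
      using tgt.LipDual_diff tgt.Free_LipDual[OF phi] tgt.DeltaSpan_LipDual[OF psi(1)] by blast
    have "src.fn (\<lambda>f. adj \<phi> f - adj \<psi> f) \<le> tgt.fn (\<lambda>h. \<phi> h - \<psi> h)"
      using adjoint_LipDual(2)[OF diff] by (simp only: adjoint_diff)
    then show ?thesis using psi span[OF psi(1)] by (intro bexI[of _ "adj \<psi>"]) auto
  qed
  then show ?thesis using adjoint_LipDual(1)[OF tgt.Free_LipDual[OF phi]] by (simp add: Free_def)
qed

end

section \<open>Invariant means and isometric actions\<close>

text \<open>The properties of a bi-invariant mean M on a class D of bounded functions on G that the argument
  uses; the SIN case provides them with D = BUC, the locally compact case with D = L_infty.\<close>
locale invariant_mean =
  fixes G :: "('g, 'x) monoid_scheme" and D :: "('g \<Rightarrow> real) set" and M :: "('g \<Rightarrow> real) \<Rightarrow> real"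
  assumes group: "group G"
    and D_cong: "\<And>F F'. F \<in> D \<Longrightarrow> (\<And>g. g \<in> carrier G \<Longrightarrow> F g = F' g) \<Longrightarrow> F' \<in> D"
    and M_cong: "\<And>F F'. F \<in> D \<Longrightarrow> F' \<in> D \<Longrightarrow> (\<And>g. g \<in> carrier G \<Longrightarrow> F g = F' g) \<Longrightarrow> M F = M F'"
    and D_add: "\<And>F F'. F \<in> D \<Longrightarrow> F' \<in> D \<Longrightarrow> (\<lambda>g. F g + F' g) \<in> D"
    and D_scale: "\<And>F c. F \<in> D \<Longrightarrow> (\<lambda>g. c * F g) \<in> D"
    and D_const: "\<And>c. (\<lambda>g. c) \<in> D"
    and M_add: "\<And>F F'. F \<in> D \<Longrightarrow> F' \<in> D \<Longrightarrow> M (\<lambda>g. F g + F' g) = M F + M F'"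
    and M_scale: "\<And>F c. F \<in> D \<Longrightarrow> M (\<lambda>g. c * F g) = c * M F"
    and M_nonneg: "\<And>F. F \<in> D \<Longrightarrow> (\<And>g. g \<in> carrier G \<Longrightarrow> F g \<ge> 0) \<Longrightarrow> M F \<ge> 0"
    and M_one: "M (\<lambda>g. 1) = 1"
    and M_left_invariant: "\<And>F h. F \<in> D \<Longrightarrow> h \<in> carrier G \<Longrightarrow> M (\<lambda>g. F (h \<otimes>\<^bsub>G\<^esub> g)) = M F"
    and M_right_invariant: "\<And>F h. F \<in> D \<Longrightarrow> h \<in> carrier G \<Longrightarrow> M (\<lambda>g. F (g \<otimes>\<^bsub>G\<^esub> h)) = M F"
    and D_uniform_limit: "\<And>F C. (\<And>g. g \<in> carrier G \<Longrightarrow> \<bar>F g\<bar> \<le> C) \<Longrightarrow>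
                 (\<And>e. e > 0 \<Longrightarrow> \<exists>F'\<in>D. \<forall>g\<in>carrier G. \<bar>F g - F' g\<bar> \<le> e) \<Longrightarrow> F \<in> D"
begin

lemma D_diff: "F \<in> D \<Longrightarrow> F' \<in> D \<Longrightarrow> (\<lambda>g. F g - F' g) \<in> D"
  using D_add[OF _ D_scale[of F' "-1"], of F] by simp

lemma M_diff: "F \<in> D \<Longrightarrow> F' \<in> D \<Longrightarrow> M (\<lambda>g. F g - F' g) = M F - M F'"
  using M_add[OF _ D_scale[of F' "-1"], of F] M_scale[of F' "-1"] by simp

lemma M_const: "M (\<lambda>g. c) = c"
  using M_scale[OF D_const[of 1], of c] M_one by simp

lemma M_abs_le:
  assumes F: "F \<in> D" and bound: "\<And>g. g \<in> carrier G \<Longrightarrow> \<bar>F g\<bar> \<le> C"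
  shows "\<bar>M F\<bar> \<le> C"
proof -
  have "M (\<lambda>g. C - F g) \<ge> 0"
    by (rule M_nonneg[OF D_diff[OF D_const F]]) (use bound in \<open>auto simp: abs_le_iff\<close>)
  moreover have "M (\<lambda>g. C + F g) \<ge> 0"
    by (rule M_nonneg[OF D_add[OF D_const F]]) (use bound in \<open>force simp: abs_le_iff\<close>)
  ultimately show ?thesis using M_diff[OF D_const F] M_add[OF D_const F] M_const by (simp add: abs_le_iff)
qed

lemma D_sum: "(\<And>i. i < (n::nat) \<Longrightarrow> A i \<in> D) \<Longrightarrow> (\<lambda>g. \<Sum>i<n. A i g) \<in> D"
  by (induct n) (auto intro: D_add D_const[of 0, simplified])

lemma M_sum: "(\<And>i. i < (n::nat) \<Longrightarrow> A i \<in> D) \<Longrightarrow> M (\<lambda>g. \<Sum>i<n. A i g) = (\<Sum>i<n. M (A i))"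
  by (induct n) (auto simp: M_add D_sum M_const[of 0, simplified])

end

locale mean_action = invariant_mean G D M for G :: "('g, 'x) monoid_scheme" and D M +
  fixes act :: "'g \<Rightarrow> 'a::metric_space \<Rightarrow> 'a" and z0 :: 'a
  assumes act_one: "\<And>x. act \<one>\<^bsub>G\<^esub> x = x"
    and act_mult: "\<And>g h x. g \<in> carrier G \<Longrightarrow> h \<in> carrier G \<Longrightarrow> act (g \<otimes>\<^bsub>G\<^esub> h) x = act g (act h x)"
    and act_iso: "\<And>g x y. g \<in> carrier G \<Longrightarrow> dist (act g x) (act g y) = dist x y"
    and D_orbit: "\<And>f C x. (\<And>a b. \<bar>f a - f b\<bar> \<le> C * dist a b) \<Longrightarrow> (\<lambda>k. f (act k x)) \<in> D"

sublocale mean_action \<subseteq> Mz: pointed_space UNIV dist z0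
  by (rule pointed_space_metric)

context mean_action
begin

abbreviation "K \<equiv> carrier G"
abbreviation "LM \<equiv> Lip0 (UNIV::'a set) dist z0"
abbreviation "LDM \<equiv> LipDual (UNIV::'a set) dist z0"
abbreviation "FM \<equiv> Free (UNIV::'a set) dist z0"
abbreviation "DSM \<equiv> DeltaSpan (UNIV::'a set) dist z0"
abbreviation "lcM \<equiv> lipconst (UNIV::'a set) dist"
abbreviation "fnM \<equiv> fnorm (UNIV::'a set) dist z0"
abbreviation "dM \<equiv> delta (UNIV::'a set) dist z0"

lemma one_closed: "\<one>\<^bsub>G\<^esub> \<in> K"
  by (rule monoid.one_closed[OF group.is_monoid[OF group]])

lemma orbit_fun_in_D: "f \<in> LM \<Longrightarrow> (\<lambda>k. f (act k x)) \<in> D"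
  by (rule D_orbit[of f "lcM f"]) (use Mz.lipconst_bound in auto)

lemma translated_orbit_fun_in_D:
  assumes f: "f \<in> LM" and g: "g \<in> K" shows "(\<lambda>k. f (act g (act k x))) \<in> D"
proof (rule D_orbit[of "\<lambda>y. f (act g y)" "lcM f"])
  fix a b show "\<bar>f (act g a) - f (act g b)\<bar> \<le> lcM f * dist a b"
    using Mz.lipconst_bound[OF f UNIV_I UNIV_I, of "act g a" "act g b"] act_iso[OF g] by simp
qed

lemma M_orbit_right_invariant:
  assumes f: "f \<in> LM" and k: "k \<in> K"
  shows "M (\<lambda>g. f (act g (act k x))) = M (\<lambda>g. f (act g x))"
proof -
  have "M (\<lambda>g. f (act g (act k x))) = M (\<lambda>g. f (act (g \<otimes>\<^bsub>G\<^esub> k) x))"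
    using orbit_fun_in_D[OF f] act_mult k by (intro M_cong D_cong[OF orbit_fun_in_D[OF f]]) auto
  also have "\<dots> = M (\<lambda>g. f (act g x))" by (rule M_right_invariant[OF orbit_fun_in_D[OF f] k])
  finally show ?thesis .
qed

lemma M_orbit_left_invariant:
  assumes f: "f \<in> LM" and k: "k \<in> K"
  shows "M (\<lambda>g. f (act k (act g x))) = M (\<lambda>g. f (act g x))"
proof -
  have "M (\<lambda>g. f (act k (act g x))) = M (\<lambda>g. f (act (k \<otimes>\<^bsub>G\<^esub> g) x))"
    using translated_orbit_fun_in_D[OF f k] act_mult k
    by (intro M_cong D_cong[OF translated_orbit_fun_in_D[OF f k]]) auto
  also have "\<dots> = M (\<lambda>g. f (act g x))" by (rule M_left_invariant[OF orbit_fun_in_D[OF f] k])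
  finally show ?thesis .
qed

definition Tstar :: "'g \<Rightarrow> ('a \<Rightarrow> real) \<Rightarrow> ('a \<Rightarrow> real)" where
  "Tstar g f = (\<lambda>m. f (act g m) - f (act g z0))"

lemma Tstar_nonexpansive:
  assumes g: "g \<in> K"
  shows "nonexpansive_lip_map UNIV dist z0 UNIV dist z0 (Tstar g)"
proof
  fix f assume f: "f \<in> LM"
  have bound: "\<bar>Tstar g f x - Tstar g f y\<bar> \<le> lcM f * dist x y" for x y
    using Mz.lipconst_bound[OF f, of "act g x" "act g y"] act_iso[OF g] by (simp add: Tstar_def)
  then show "Tstar g f \<in> LM" by (auto simp: Lip0_def Tstar_def)
  show "lcM (Tstar g f) \<le> lcM f" by (rule Mz.lipconst_leI) (use bound Mz.lipconst_nonneg[OF f] in auto)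
qed (auto simp: Tstar_def algebra_simps)

lemma Tgdd_eq_adjoint: "Tgdd act z0 g = lip_adjoint UNIV dist z0 (Tstar g)"
  by (simp add: fun_eq_iff Tgdd_def lip_adjoint_def Tstar_def)

lemma Tgdd_diff: "Tgdd act z0 g (\<lambda>f. \<phi> f - \<psi> f) = (\<lambda>f. Tgdd act z0 g \<phi> f - Tgdd act z0 g \<psi> f)"
  by (auto simp: Tgdd_def)

lemma Tgdd_bound:
  "g \<in> K \<Longrightarrow> \<phi> \<in> LDM \<Longrightarrow> f \<in> LM \<Longrightarrow> \<bar>Tgdd act z0 g \<phi> f\<bar> \<le> fnM \<phi> * lcM f"
  unfolding Tgdd_eq_adjoint by (rule nonexpansive_lip_map.adjoint_bound[OF Tstar_nonexpansive])

lemma Tgdd_LipDual: "g \<in> K \<Longrightarrow> \<phi> \<in> LDM \<Longrightarrow> Tgdd act z0 g \<phi> \<in> LDM"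
  unfolding Tgdd_eq_adjoint by (rule nonexpansive_lip_map.adjoint_LipDual(1)[OF Tstar_nonexpansive])

lemma Tgdd_delta_sum:
  assumes g: "g \<in> K" and f: "f \<in> LM"
  shows "Tgdd act z0 g (\<lambda>f. \<Sum>i<n. c i * dM (m i) f) f = (\<Sum>i<n. c i * (f (act g (m i)) - f (act g z0)))"
  using f nonexpansive_lip_map.maps_Lip0[OF Tstar_nonexpansive[OF g] f]
  by (simp add: Tgdd_def Mz.delta_apply Tstar_def)

text \<open>T_g moves delta(m) to delta(gm) - delta(g0), so the extra point g0 carries the total weight.\<close>
lemma Tgdd_DeltaSpan:
  assumes g: "g \<in> K" and psi: "\<psi> \<in> DSM"
  shows "Tgdd act z0 g \<psi> \<in> DSM"
proof -
  obtain n :: nat and c m where psi_eq: "\<psi> = (\<lambda>f. \<Sum>i<n. c i * dM (m i) f)"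
    using psi unfolding Mz.DeltaSpan_iff by blast
  define C where "C = (\<lambda>i. if i < n then c i else - (\<Sum>j<n. c j))"
  define N where "N = (\<lambda>i. if i < n then act g (m i) else act g z0)"
  have "Tgdd act z0 g \<psi> f = (\<Sum>i<Suc n. C i * dM (N i) f)" for f
  proof (cases "f \<in> LM")
    case True
    have "(\<Sum>i<n. C i * dM (N i) f) = (\<Sum>i<n. c i * f (act g (m i)))"
      by (rule sum.cong) (auto simp: C_def N_def Mz.delta_apply[OF True])
    then show ?thesis
      by (simp add: psi_eq Tgdd_delta_sum[OF g True] C_def N_def Mz.delta_apply[OF True]
          right_diff_distrib sum_subtractf sum_distrib_right)
  next
    case False then show ?thesis by (simp add: Tgdd_def delta_def)
  qed
  then show ?thesis unfolding Mz.DeltaSpan_iff by (intro exI[of _ "Suc n"] exI[of _ C] exI[of _ N]) auto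
qed

lemma Tgdd_Free: "g \<in> K \<Longrightarrow> \<mu> \<in> FM \<Longrightarrow> Tgdd act z0 g \<mu> \<in> FM"
  unfolding Tgdd_eq_adjoint
  by (rule nonexpansive_lip_map.adjoint_Free[OF Tstar_nonexpansive])
    (use Tgdd_DeltaSpan Tgdd_eq_adjoint in auto)

lemma Tgdd_fun_in_D_DeltaSpan:
  assumes psi: "\<psi> \<in> DSM" and f: "f \<in> LM" shows "(\<lambda>g. Tgdd act z0 g \<psi> f) \<in> D"
proof -
  obtain n :: nat and c m where psi_eq: "\<psi> = (\<lambda>f. \<Sum>i<n. c i * dM (m i) f)"
    using psi unfolding Mz.DeltaSpan_iff by blast
  have "(\<lambda>g. \<Sum>i<n. c i * (f (act g (m i)) - f (act g z0))) \<in> D"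
    by (intro D_sum D_scale D_diff orbit_fun_in_D[OF f])
  then show ?thesis by (rule D_cong) (simp add: psi_eq Tgdd_delta_sum[OF _ f])
qed

lemma Tgdd_fun_in_D:
  assumes mu: "\<mu> \<in> FM" shows "(\<lambda>g. Tgdd act z0 g \<mu> f) \<in> D"
proof (cases "f \<in> LM")
  case True
  show ?thesis
  proof (rule D_uniform_limit)
    show "\<bar>Tgdd act z0 g \<mu> f\<bar> \<le> fnM \<mu> * lcM f" if "g \<in> K" for g
      by (rule Tgdd_bound[OF that Mz.Free_LipDual[OF mu] True])
  next
    fix e :: real assume e: "e > 0"
    have L: "lcM f \<ge> 0" by (rule Mz.lipconst_nonneg[OF True])
    obtain \<psi> where psi: "\<psi> \<in> DSM" "fnM (\<lambda>f. \<mu> f - \<psi> f) < e / (lcM f + 1)"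
      using Mz.Free_approx[OF mu, of "e / (lcM f + 1)"] e L by auto
    have diff: "(\<lambda>f. \<mu> f - \<psi> f) \<in> LDM"
      using Mz.LipDual_diff Mz.Free_LipDual[OF mu] Mz.DeltaSpan_LipDual[OF psi(1)] by blast
    have "\<bar>Tgdd act z0 g \<mu> f - Tgdd act z0 g \<psi> f\<bar> \<le> e" if g: "g \<in> K" for g
    proof -
      have "\<bar>Tgdd act z0 g \<mu> f - Tgdd act z0 g \<psi> f\<bar> \<le> fnM (\<lambda>f. \<mu> f - \<psi> f) * lcM f"
        using Tgdd_bound[OF g diff True] by (simp add: Tgdd_diff)
      also have "\<dots> \<le> e / (lcM f + 1) * lcM f" using psi(2) L by (intro mult_right_mono) auto
      also have "\<dots> \<le> e" using e L by (simp add: field_simps)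
      finally show ?thesis .
    qed
    then show "\<exists>F'\<in>D. \<forall>g\<in>K. \<bar>Tgdd act z0 g \<mu> f - F' g\<bar> \<le> e"
      by (intro bexI[of _ "\<lambda>g. Tgdd act z0 g \<psi> f"] ballI Tgdd_fun_in_D_DeltaSpan[OF psi(1) True])
  qed
next
  case False
  show ?thesis by (rule D_cong[OF D_const[of 0]]) (simp add: Tgdd_def False)
qed

section \<open>Averaging over the orbits\<close>

definition average :: "('a \<Rightarrow> real) \<Rightarrow> 'a \<Rightarrow> real" where
  "average f x = M (\<lambda>k. f (act k x)) - M (\<lambda>k. f (act k z0))"

lemma average_lipschitz:
  assumes f: "f \<in> LM" shows "\<bar>average f x - average f y\<bar> \<le> lcM f * dist x y"
proof -
  have "average f x - average f y = M (\<lambda>k. f (act k x) - f (act k y))"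
    using M_diff[OF orbit_fun_in_D[OF f] orbit_fun_in_D[OF f]] by (simp add: average_def)
  also have "\<bar>\<dots>\<bar> \<le> lcM f * dist x y"
  proof (rule M_abs_le[OF D_diff[OF orbit_fun_in_D[OF f] orbit_fun_in_D[OF f]]])
    fix k assume "k \<in> K"
    then show "\<bar>f (act k x) - f (act k y)\<bar> \<le> lcM f * dist x y"
      using Mz.lipconst_bound[OF f UNIV_I UNIV_I, of "act k x" "act k y"] act_iso by simp
  qed
  finally show ?thesis .
qed

lemma average_Lip0: assumes f: "f \<in> LM" shows "average f \<in> LM" "lcM (average f) \<le> lcM f"
proof -
  show "average f \<in> LM" using average_lipschitz[OF f] by (auto simp: Lip0_def average_def)
  show "lcM (average f) \<le> lcM f"
    by (rule Mz.lipconst_leI) (use average_lipschitz[OF f] Mz.lipconst_nonneg[OF f] in auto)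
qed

lemma average_invariant: "f \<in> LM \<Longrightarrow> k \<in> K \<Longrightarrow> average f (act k x) = average f x"
  by (simp add: average_def M_orbit_right_invariant)

lemma average_Lip0G: "f \<in> LM \<Longrightarrow> average f \<in> Lip0G G act z0"
  unfolding Lip0G_def using average_Lip0(1) average_invariant by blast

lemma average_id_on_Lip0G: assumes f: "f \<in> Lip0G G act z0" shows "average f = f"
proof
  fix x
  have fL: "f \<in> LM" and inv: "\<And>g x. g \<in> K \<Longrightarrow> f (act g x) = f x" using f by (auto simp: Lip0G_def)
  have "M (\<lambda>k. f (act k y)) = f y" for y
    using M_cong[OF orbit_fun_in_D[OF fL] D_const, of y "f y"] inv M_const by simp
  moreover have "f z0 = 0" using fL by (simp add: Lip0_def)
  ultimately show "average f x = f x" by (simp add: average_def)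
qed

lemma average_add: "f \<in> LM \<Longrightarrow> g \<in> LM \<Longrightarrow> average (\<lambda>x. f x + g x) = (\<lambda>x. average f x + average g x)"
  by (simp add: fun_eq_iff average_def M_add orbit_fun_in_D)

lemma average_scale: "f \<in> LM \<Longrightarrow> average (\<lambda>x. c * f x) = (\<lambda>x. c * average f x)"
  by (simp add: fun_eq_iff average_def M_scale orbit_fun_in_D right_diff_distrib)

lemma average_Tstar: assumes g: "g \<in> K" and f: "f \<in> LM" shows "average (Tstar g f) = average f"
proof
  fix x
  have "M (\<lambda>k. Tstar g f (act k y)) = M (\<lambda>k. f (act k y)) - f (act g z0)" for y
    using M_diff[OF translated_orbit_fun_in_D[OF f g] D_const, of y "f (act g z0)"] M_const
      M_orbit_left_invariant[OF f g]
    by (simp add: Tstar_def)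
  then show "average (Tstar g f) x = average f x" by (simp add: average_def)
qed

lemma orbcl_self: "x \<in> orbcl G act x"
proof -
  have "act \<one>\<^bsub>G\<^esub> x \<in> (\<lambda>g. act g x) ` K" by (rule imageI[OF one_closed])
  then show ?thesis unfolding orbcl_def act_one by (rule closure_subset[THEN subsetD])
qed

text \<open>The average is invariant and continuous, hence constant on orbit closures.\<close>
lemma average_orbcl: assumes f: "f \<in> LM" and a: "a \<in> orbcl G act x" shows "average f a = average f x"
proof (rule ccontr)
  define \<delta> where "\<delta> = \<bar>average f a - average f x\<bar>"
  assume "average f a \<noteq> average f x"
  then have pos: "\<delta> > 0" by (simp add: \<delta>_def)
  have L: "lcM f \<ge> 0" by (rule Mz.lipconst_nonneg[OF f])
  have "\<delta> / (lcM f + 1) > 0" using pos L by simp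
  then obtain k where k: "k \<in> K" "dist (act k x) a < \<delta> / (lcM f + 1)"
    using a unfolding orbcl_def closure_approachable by blast
  have "\<delta> = \<bar>average f a - average f (act k x)\<bar>" using average_invariant[OF f k(1)] by (simp add: \<delta>_def)
  also have "\<dots> \<le> lcM f * dist a (act k x)" by (rule average_lipschitz[OF f])
  also have "\<dots> \<le> lcM f * (\<delta> / (lcM f + 1))" using k(2) L by (intro mult_left_mono) (auto simp: dist_commute)
  also have "\<dots> < \<delta>" using pos L by (simp add: field_simps)
  finally show False by simp
qed

section \<open>The orbit space and the operator S\<close>

abbreviation "orb \<equiv> orbcl G act"
abbreviation "QS \<equiv> quot_space G act"
abbreviation "q0 \<equiv> orbcl G act z0"
abbreviation "LQ \<equiv> Lip0 QS quot_dist q0"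
abbreviation "LDQ \<equiv> LipDual QS quot_dist q0"
abbreviation "FQ \<equiv> Free QS quot_dist q0"
abbreviation "DSQ \<equiv> DeltaSpan QS quot_dist q0"
abbreviation "lcQ \<equiv> lipconst QS quot_dist"
abbreviation "fnQ \<equiv> fnorm QS quot_dist q0"
abbreviation "dQ \<equiv> delta QS quot_dist q0"

lemma orbcl_in_quot_space: "orb x \<in> QS" by (simp add: quot_space_def)

lemma quot_dist_le: "a \<in> A \<Longrightarrow> b \<in> B \<Longrightarrow> quot_dist A B \<le> dist a b"
  unfolding quot_dist_def by (rule cInf_lower) (auto intro: bdd_belowI[of _ 0])

lemma quot_dist_ge: assumes "a0 \<in> A" "b0 \<in> B" "\<And>a b. a \<in> A \<Longrightarrow> b \<in> B \<Longrightarrow> c \<le> dist a b"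
  shows "c \<le> quot_dist A B"
  unfolding quot_dist_def by (rule cInf_greatest) (use assms in auto)

lemma pointed_space_quot: "pointed_space QS quot_dist q0"
proof
  fix A B assume "A \<in> QS" "B \<in> QS"
  then obtain x y where "A = orb x" "B = orb y" by (auto simp: quot_space_def)
  then show "0 \<le> quot_dist A B" using orbcl_self by (intro quot_dist_ge) auto
qed (rule orbcl_in_quot_space)

end

sublocale mean_action \<subseteq> Qz: pointed_space "quot_space G act" quot_dist "orbcl G act z0"
  by (rule pointed_space_quot)

context mean_action
begin

text \<open>The average factored through the orbit space; outside QS it is 0, as members of Lip0 QS must be.\<close>
definition avg_quot :: "('a \<Rightarrow> real) \<Rightarrow> 'a set \<Rightarrow> real" where
  "avg_quot f = (\<lambda>A. if A \<in> QS then average f (SOME x. A = orb x) else 0)"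

lemma avg_quot_orbcl: assumes f: "f \<in> LM" shows "avg_quot f (orb x) = average f x"
proof -
  define y where "y = (SOME y. orb x = orb y)"
  have "orb x = orb y" unfolding y_def by (rule someI[of _ x]) simp
  then have "average f x = average f y" using average_orbcl[OF f] orbcl_self by metis
  then show ?thesis by (simp add: avg_quot_def orbcl_in_quot_space y_def)
qed

lemma Psi_avg_quot: "f \<in> LM \<Longrightarrow> Psi G act (avg_quot f) = average f"
  by (simp add: fun_eq_iff Psi_def avg_quot_orbcl)

lemma avg_quot_lipschitz:
  assumes f: "f \<in> LM" and A: "A \<in> QS" and B: "B \<in> QS"
  shows "\<bar>avg_quot f A - avg_quot f B\<bar> \<le> lcM f * quot_dist A B"
proof -
  obtain x y where xy: "A = orb x" "B = orb y" using A B unfolding quot_space_def by blast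
  have key: "\<bar>average f x - average f y\<bar> \<le> lcM f * dist a b" if "a \<in> A" "b \<in> B" for a b
    using average_lipschitz[OF f, of a b] average_orbcl[OF f, of a x] average_orbcl[OF f, of b y] that xy
    by simp
  have L: "lcM f \<ge> 0" by (rule Mz.lipconst_nonneg[OF f])
  have "\<bar>average f x - average f y\<bar> \<le> lcM f * quot_dist A B"
  proof (cases "lcM f = 0")
    case True
    then show ?thesis using key[of x y] xy orbcl_self by simp
  next
    case False
    then have pos: "lcM f > 0" using L by simp
    have "\<bar>average f x - average f y\<bar> / lcM f \<le> quot_dist A B"
      using key pos xy orbcl_self by (intro quot_dist_ge) (auto simp: divide_le_eq mult.commute)
    then show ?thesis using pos by (simp add: divide_le_eq mult.commute)
  qed
  then show ?thesis using xy avg_quot_orbcl[OF f] by simp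
qed

lemma avg_quot_nonexpansive: "nonexpansive_lip_map UNIV dist z0 QS quot_dist q0 avg_quot"
proof (unfold_locales)
  fix f assume f: "f \<in> LM"
  have "avg_quot f q0 = 0" using avg_quot_orbcl[OF f, of z0] by (simp add: average_def)
  then show "avg_quot f \<in> LQ" unfolding Lip0_def using avg_quot_lipschitz[OF f] by (auto simp: avg_quot_def)
  show "lcQ (avg_quot f) \<le> lcM f"
    by (rule Qz.lipconst_leI) (use Mz.lipconst_nonneg[OF f] avg_quot_lipschitz[OF f] in auto)
next
  show "avg_quot (\<lambda>x. f x + g x) = (\<lambda>A. avg_quot f A + avg_quot g A)" if "f \<in> LM" "g \<in> LM" for f g
    using that by (simp add: fun_eq_iff avg_quot_def average_add)
  show "avg_quot (\<lambda>x. c * f x) = (\<lambda>A. c * avg_quot f A)" if "f \<in> LM" for c f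
    using that by (simp add: fun_eq_iff avg_quot_def average_scale)
qed

lemma Psi_nonexpansive: "nonexpansive_lip_map QS quot_dist q0 UNIV dist z0 (Psi G act)"
proof (unfold_locales)
  fix h assume h: "h \<in> LQ"
  have bound: "\<bar>Psi G act h x - Psi G act h y\<bar> \<le> lcQ h * dist x y" for x y
  proof -
    have "\<bar>Psi G act h x - Psi G act h y\<bar> \<le> lcQ h * quot_dist (orb x) (orb y)"
      unfolding Psi_def by (rule Qz.lipconst_bound[OF h orbcl_in_quot_space orbcl_in_quot_space])
    also have "\<dots> \<le> lcQ h * dist x y"
      by (rule mult_left_mono[OF quot_dist_le[OF orbcl_self orbcl_self] Qz.lipconst_nonneg[OF h]])
    finally show ?thesis .
  qed
  have "h q0 = 0" using h by (simp add: Lip0_def)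
  then show "Psi G act h \<in> LM" using bound by (auto simp: Lip0_def Psi_def)
  show "lcM (Psi G act h) \<le> lcQ h" by (rule Mz.lipconst_leI) (use bound Qz.lipconst_nonneg[OF h] in auto)
qed (auto simp: Psi_def)

end

sublocale mean_action \<subseteq> Avg: nonexpansive_lip_map UNIV dist z0 "quot_space G act" quot_dist "orbcl G act z0" avg_quot
  by (rule avg_quot_nonexpansive)

sublocale mean_action \<subseteq> Psi: nonexpansive_lip_map "quot_space G act" quot_dist "orbcl G act z0" UNIV dist z0 "Psi G act"
  by (rule Psi_nonexpansive)

context mean_action
begin

definition avg_op :: "(('a set \<Rightarrow> real) \<Rightarrow> real) \<Rightarrow> (('a \<Rightarrow> real) \<Rightarrow> real)" where
  "avg_op = lip_adjoint UNIV dist z0 avg_quot"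

text \<open>The operator S of the theorem, extended to F(M)** as the adjoint of Psi.\<close>
definition quot_op :: "(('a \<Rightarrow> real) \<Rightarrow> real) \<Rightarrow> (('a set \<Rightarrow> real) \<Rightarrow> real)" where
  "quot_op = lip_adjoint QS quot_dist q0 (Psi G act)"

lemma avg_op_invariant: assumes g: "g \<in> K" shows "Tgdd act z0 g (avg_op \<nu>) = avg_op \<nu>"
proof
  fix f show "Tgdd act z0 g (avg_op \<nu>) f = avg_op \<nu> f"
  proof (cases "f \<in> LM")
    case True
    have "avg_quot (Tstar g f) = avg_quot f" unfolding avg_quot_def average_Tstar[OF g True] ..
    then show ?thesis
      using nonexpansive_lip_map.maps_Lip0[OF Tstar_nonexpansive[OF g] True] True
      by (simp add: Tgdd_eq_adjoint lip_adjoint_def avg_op_def)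
  qed (simp add: Tgdd_def avg_op_def lip_adjoint_def)
qed

lemma quot_op_delta_sum: "quot_op (\<lambda>f. \<Sum>i<n. c i * dM (m i) f) = (\<lambda>h. \<Sum>i<n. c i * dQ (orb (m i)) h)"
  using Psi.maps_Lip0 by (auto simp: fun_eq_iff quot_op_def lip_adjoint_def delta_def Psi_def)

lemma quot_op_delta: "quot_op (dM x) = dQ (orb x)"
  using Psi.maps_Lip0 by (auto simp: fun_eq_iff quot_op_def lip_adjoint_def delta_def Psi_def)

lemma quot_op_LipDual: assumes "\<mu> \<in> LDM" shows "quot_op \<mu> \<in> LDQ" "fnQ (quot_op \<mu>) \<le> fnM \<mu>"
  using Psi.adjoint_LipDual[OF assms] unfolding quot_op_def by auto

lemma quot_op_add: "quot_op (\<lambda>f. \<mu> f + \<mu>' f) = (\<lambda>h. quot_op \<mu> h + quot_op \<mu>' h)"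
  unfolding quot_op_def by (rule Psi.adjoint_add)

lemma quot_op_scale: "quot_op (\<lambda>f. c * \<mu> f) = (\<lambda>h. c * quot_op \<mu> h)"
  unfolding quot_op_def by (rule Psi.adjoint_scale)

lemma quot_op_diff: "quot_op (\<lambda>f. \<mu> f - \<mu>' f) = (\<lambda>h. quot_op \<mu> h - quot_op \<mu>' h)"
  unfolding quot_op_def by (rule Psi.adjoint_diff)

lemma quot_op_DeltaSpan: "\<psi> \<in> DSM \<Longrightarrow> quot_op \<psi> \<in> DSQ"
  unfolding Mz.DeltaSpan_iff Qz.DeltaSpan_iff
  by (elim exE conjE, rule_tac x=n in exI, rule_tac x=c in exI, rule_tac x="\<lambda>i. orb (m i)" in exI)
    (simp add: quot_op_delta_sum orbcl_in_quot_space)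

lemma quot_op_Free: "\<mu> \<in> FM \<Longrightarrow> quot_op \<mu> \<in> FQ"
  unfolding quot_op_def by (rule Psi.adjoint_Free) (use quot_op_DeltaSpan quot_op_def in auto)

lemma DeltaSpan_quot_lift: assumes psi: "\<psi> \<in> DSQ" shows "\<exists>\<mu>\<in>DSM. quot_op \<mu> = \<psi>"
proof -
  obtain n :: nat and c A where psi_eq: "\<psi> = (\<lambda>f. \<Sum>i<n. c i * dQ (A i) f)" and A: "\<forall>i<n. A i \<in> QS"
    using psi unfolding Qz.DeltaSpan_iff by blast
  define m where "m = (\<lambda>i. SOME x. A i = orb x)"
  have "\<forall>i<n. A i = orb (m i)"
    using A unfolding m_def quot_space_def by (metis (mono_tags, lifting) rangeE someI)
  then have "\<psi> = quot_op (\<lambda>f. \<Sum>i<n. c i * dM (m i) f)"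
    unfolding psi_eq quot_op_delta_sum by (intro ext sum.cong) auto
  moreover have "(\<lambda>f. \<Sum>i<n. c i * dM (m i) f) \<in> DSM" unfolding Mz.DeltaSpan_iff by blast
  ultimately show ?thesis by blast
qed

lemma M_Tgdd_delta_sum:
  assumes psi: "\<psi> \<in> DSM" and f: "f \<in> LM"
  shows "M (\<lambda>g. Tgdd act z0 g \<psi> f) = \<psi> (average f)"
proof -
  obtain n :: nat and c m where psi_eq: "\<psi> = (\<lambda>f. \<Sum>i<n. c i * dM (m i) f)"
    using psi unfolding Mz.DeltaSpan_iff by blast
  define A where "A = (\<lambda>i g. c i * (f (act g (m i)) - f (act g z0)))"
  have AD: "A i \<in> D" for i unfolding A_def by (intro D_scale D_diff orbit_fun_in_D[OF f])
  have "M (\<lambda>g. Tgdd act z0 g \<psi> f) = M (\<lambda>g. \<Sum>i<n. A i g)"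
    using Tgdd_fun_in_D[OF Mz.DeltaSpan_Free[OF psi]] D_sum[OF AD]
    by (rule M_cong) (simp add: psi_eq Tgdd_delta_sum[OF _ f] A_def)
  also have "\<dots> = (\<Sum>i<n. M (A i))" by (rule M_sum[OF AD])
  also have "\<dots> = (\<Sum>i<n. c i * average f (m i))"
    by (simp add: A_def M_scale M_diff D_diff orbit_fun_in_D[OF f] average_def)
  also have "\<dots> = \<psi> (average f)" using average_Lip0(1)[OF f] by (simp add: psi_eq Mz.delta_apply)
  finally show ?thesis .
qed

text \<open>The mean and the evaluation can be exchanged: R_G(mu)(f) = mu(average f), first on the span
  of the deltas, then by density.\<close>
lemma M_Tgdd_Free:
  assumes mu: "\<mu> \<in> FM" and f: "f \<in> LM"
  shows "M (\<lambda>g. Tgdd act z0 g \<mu> f) = \<mu> (average f)"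
proof -
  have L: "lcM f \<ge> 0" by (rule Mz.lipconst_nonneg[OF f])
  have "\<bar>M (\<lambda>g. Tgdd act z0 g \<mu> f) - \<mu> (average f)\<bar> \<le> 0 + e" if e: "e > 0" for e
  proof -
    obtain \<psi> where psi: "\<psi> \<in> DSM" "fnM (\<lambda>f. \<mu> f - \<psi> f) < e / (2 * lcM f + 1)"
      using Mz.Free_approx[OF mu, of "e / (2 * lcM f + 1)"] e L by auto
    define \<delta> where "\<delta> = (\<lambda>f. \<mu> f - \<psi> f)"
    have \<delta>: "\<delta> \<in> LDM"
      unfolding \<delta>_def using Mz.LipDual_diff Mz.Free_LipDual[OF mu] Mz.DeltaSpan_LipDual[OF psi(1)] by blast
    have in_D: "(\<lambda>g. Tgdd act z0 g \<mu> f) \<in> D" "(\<lambda>g. Tgdd act z0 g \<psi> f) \<in> D"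
      using Tgdd_fun_in_D mu Mz.DeltaSpan_Free[OF psi(1)] by auto
    have "\<bar>M (\<lambda>g. Tgdd act z0 g \<mu> f) - M (\<lambda>g. Tgdd act z0 g \<psi> f)\<bar> = \<bar>M (\<lambda>g. Tgdd act z0 g \<delta> f)\<bar>"
      using M_diff[OF in_D] by (simp add: \<delta>_def Tgdd_diff)
    also have "\<dots> \<le> fnM \<delta> * lcM f"
      using D_diff[OF in_D] Tgdd_bound[OF _ \<delta> f] by (intro M_abs_le) (simp_all add: \<delta>_def Tgdd_diff)
    finally have 1: "\<bar>M (\<lambda>g. Tgdd act z0 g \<mu> f) - M (\<lambda>g. Tgdd act z0 g \<psi> f)\<bar> \<le> fnM \<delta> * lcM f" .
    have "\<bar>\<mu> (average f) - \<psi> (average f)\<bar> \<le> fnM \<delta> * lcM (average f)"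
      using Mz.fnorm_bound[OF \<delta> average_Lip0(1)[OF f]] by (simp add: \<delta>_def)
    also have "\<dots> \<le> fnM \<delta> * lcM f" by (rule mult_left_mono[OF average_Lip0(2)[OF f] Mz.fnorm_nonneg[OF \<delta>]])
    finally have 2: "\<bar>\<mu> (average f) - \<psi> (average f)\<bar> \<le> fnM \<delta> * lcM f" .
    have "fnM \<delta> * lcM f \<le> e / (2 * lcM f + 1) * lcM f"
      using psi(2) L by (intro mult_right_mono) (simp_all add: \<delta>_def)
    also have "\<dots> \<le> e / 2" using e L by (simp add: field_simps)
    finally show ?thesis using 1 2 M_Tgdd_delta_sum[OF psi(1) f] by linarith
  qed
  then show ?thesis using field_le_epsilon[of "\<bar>M (\<lambda>g. Tgdd act z0 g \<mu> f) - \<mu> (average f)\<bar>" 0] by simp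
qed

lemma RG_eq: "\<mu> \<in> FM \<Longrightarrow> RG act z0 M \<mu> = avg_op (quot_op \<mu>)"
  using M_Tgdd_Free Psi.maps_Lip0 Avg.maps_Lip0
  by (auto simp: fun_eq_iff RG_def avg_op_def quot_op_def lip_adjoint_def Psi_avg_quot)

lemma RG_fixed:
  assumes phi: "\<phi> \<in> FM" and inv: "\<And>g. g \<in> K \<Longrightarrow> Tgdd act z0 g \<phi> = \<phi>"
  shows "RG act z0 M \<phi> = \<phi>"
proof
  fix f show "RG act z0 M \<phi> f = \<phi> f"
  proof (cases "f \<in> LM")
    case True
    have "M (\<lambda>g. Tgdd act z0 g \<phi> f) = M (\<lambda>g. \<phi> f)"
      by (rule M_cong[OF Tgdd_fun_in_D[OF phi] D_const]) (simp add: inv)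
    then show ?thesis using True by (simp add: RG_def M_const)
  qed (simp add: RG_def Mz.LipDual_outside[OF Mz.Free_LipDual[OF phi]])
qed

end

section \<open>The projection P_G\<close>

locale invariant_projection = mean_action G D M act z0
  for G :: "('g, 'x) monoid_scheme" and D M and act :: "'g \<Rightarrow> 'a::metric_space \<Rightarrow> 'a" and z0 +
  fixes Q :: "(('a \<Rightarrow> real) \<Rightarrow> real) \<Rightarrow> (('a \<Rightarrow> real) \<Rightarrow> real)"
  assumes Q_maps: "\<forall>\<phi>\<in>LipDual UNIV dist z0. Q \<phi> \<in> LipDual UNIV dist z0"
    and Q_lin: "lin_on (LipDual UNIV dist z0) Q"
    and Q_bdd: "\<exists>C. \<forall>\<phi>\<in>LipDual UNIV dist z0.
                  fnorm UNIV dist z0 (Q \<phi>) \<le> C * fnorm UNIV dist z0 \<phi>"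
    and Q_proj: "\<forall>\<phi>\<in>LipDual UNIV dist z0. Q (Q \<phi>) = Q \<phi>"
    and Q_range: "Q ` LipDual UNIV dist z0 = Free UNIV dist z0"
    and Q_ker: "\<forall>g\<in>carrier G. \<forall>\<phi>\<in>LipDual UNIV dist z0.
                  Q \<phi> = zerof \<longrightarrow> Q (Tgdd act z0 g \<phi>) = zerof"
begin

abbreviation "PGo \<equiv> PG act z0 M Q"
abbreviation "opQ \<equiv> opnorm_on LDM fnM fnM Q"

lemma Q_LipDual: "\<phi> \<in> LDM \<Longrightarrow> Q \<phi> \<in> LDM"
  using Q_maps by blast

lemma Q_add: "\<phi> \<in> LDM \<Longrightarrow> \<psi> \<in> LDM \<Longrightarrow> Q (\<lambda>f. \<phi> f + \<psi> f) = (\<lambda>f. Q \<phi> f + Q \<psi> f)"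
  using Q_lin unfolding lin_on_def by blast

lemma Q_scale: "\<phi> \<in> LDM \<Longrightarrow> Q (\<lambda>f. c * \<phi> f) = (\<lambda>f. c * Q \<phi> f)"
  using Q_lin unfolding lin_on_def by blast

lemma Q_diff: "\<phi> \<in> LDM \<Longrightarrow> \<psi> \<in> LDM \<Longrightarrow> Q (\<lambda>f. \<phi> f - \<psi> f) = (\<lambda>f. Q \<phi> f - Q \<psi> f)"
  using Q_add[OF _ Mz.LipDual_scale, of \<phi> \<psi> "-1"] Q_scale[of \<psi> "-1"] by simp

lemma Q_zerof: "Q zerof = zerof"
  using Q_scale[OF Mz.zerof_LipDual, of 0] by (simp add: zerof_def)

lemma Q_Free: "\<phi> \<in> LDM \<Longrightarrow> Q \<phi> \<in> FM"
  using Q_range by blast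

lemma Q_id_on_Free: "\<mu> \<in> FM \<Longrightarrow> Q \<mu> = \<mu>"
  using Q_range Q_proj by (metis imageE)

lemma opnorm_bdd_above: "bdd_above (insert 0 {fnM (Q \<phi>) | \<phi>. \<phi> \<in> LDM \<and> fnM \<phi> \<le> 1})"
proof -
  obtain C where C: "\<forall>\<phi>\<in>LDM. fnM (Q \<phi>) \<le> C * fnM \<phi>" using Q_bdd by blast
  have "fnM (Q \<phi>) \<le> \<bar>C\<bar>" if "\<phi> \<in> LDM" "fnM \<phi> \<le> 1" for \<phi>
    using C that Mz.fnorm_nonneg[OF that(1)]
    by (smt (verit) mult_left_le mult_nonneg_nonneg mult_nonpos_nonneg abs_ge_self abs_mult)
  then show ?thesis by (intro bdd_aboveI[of _ "\<bar>C\<bar>"]) auto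
qed

lemma opnorm_nonneg: "opQ \<ge> 0"
  unfolding opnorm_on_def by (rule cSup_upper[OF _ opnorm_bdd_above]) auto

lemma opnorm_bound: assumes phi: "\<phi> \<in> LDM" shows "fnM (Q \<phi>) \<le> opQ * fnM \<phi>"
proof (cases "fnM \<phi> = 0")
  case True
  then show ?thesis using Mz.fnorm_eq_0D[OF phi] Q_zerof Mz.fnorm_zerof by simp
next
  case False
  then have pos: "fnM \<phi> > 0" using Mz.fnorm_nonneg[OF phi] by simp
  define \<psi> where "\<psi> = (\<lambda>f. (1 / fnM \<phi>) * \<phi> f)"
  have psi: "\<psi> \<in> LDM" unfolding \<psi>_def by (rule Mz.LipDual_scale[OF phi])
  have "fnM \<psi> \<le> 1" using Mz.fnorm_scale_le[OF phi, of "1 / fnM \<phi>"] pos by (simp add: \<psi>_def)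
  then have "fnM (Q \<psi>) \<le> opQ"
    unfolding opnorm_on_def using psi by (intro cSup_upper[OF _ opnorm_bdd_above]) auto
  moreover have "Q \<phi> = (\<lambda>f. fnM \<phi> * Q \<psi> f)"
    using Q_scale[OF psi, of "fnM \<phi>"] pos by (simp add: \<psi>_def)
  moreover have "fnM (\<lambda>f. fnM \<phi> * Q \<psi> f) \<le> fnM \<phi> * fnM (Q \<psi>)"
    using Mz.fnorm_scale_le[OF Q_LipDual[OF psi], of "fnM \<phi>"] pos by simp
  ultimately show ?thesis using pos by (simp add: mult.commute mult_left_mono order_trans)
qed

definition lift_op :: "(('a set \<Rightarrow> real) \<Rightarrow> real) \<Rightarrow> (('a \<Rightarrow> real) \<Rightarrow> real)" where
  "lift_op \<nu> = Q (avg_op \<nu>)"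

lemma avg_op_LipDual: assumes "\<nu> \<in> LDQ" shows "avg_op \<nu> \<in> LDM" "fnM (avg_op \<nu>) \<le> fnQ \<nu>"
  using Avg.adjoint_LipDual[OF assms] unfolding avg_op_def by auto

lemma lift_op_Free: "\<nu> \<in> LDQ \<Longrightarrow> lift_op \<nu> \<in> FM"
  unfolding lift_op_def by (rule Q_Free[OF avg_op_LipDual(1)])

lemma lift_op_bound: assumes nu: "\<nu> \<in> LDQ" shows "fnM (lift_op \<nu>) \<le> opQ * fnQ \<nu>"
  using opnorm_bound[OF avg_op_LipDual(1)[OF nu]] mult_left_mono[OF avg_op_LipDual(2)[OF nu] opnorm_nonneg]
  unfolding lift_op_def by linarith

lemma lift_op_add: "\<nu> \<in> LDQ \<Longrightarrow> \<nu>' \<in> LDQ \<Longrightarrow> lift_op (\<lambda>h. \<nu> h + \<nu>' h) = (\<lambda>f. lift_op \<nu> f + lift_op \<nu>' f)"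
  unfolding lift_op_def avg_op_def Avg.adjoint_add by (rule Q_add[OF avg_op_LipDual(1) avg_op_LipDual(1), unfolded avg_op_def])

lemma lift_op_scale: "\<nu> \<in> LDQ \<Longrightarrow> lift_op (\<lambda>h. c * \<nu> h) = (\<lambda>f. c * lift_op \<nu> f)"
  unfolding lift_op_def avg_op_def Avg.adjoint_scale by (rule Q_scale[OF avg_op_LipDual(1), unfolded avg_op_def])

lemma lift_op_diff: "\<nu> \<in> LDQ \<Longrightarrow> \<nu>' \<in> LDQ \<Longrightarrow> lift_op (\<lambda>h. \<nu> h - \<nu>' h) = (\<lambda>f. lift_op \<nu> f - lift_op \<nu>' f)"
  unfolding lift_op_def avg_op_def Avg.adjoint_diff by (rule Q_diff[OF avg_op_LipDual(1) avg_op_LipDual(1), unfolded avg_op_def])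

text \<open>Since avg_op nu is G-invariant, T_g** maps avg_op nu - Q (avg_op nu), an element of ker Q, to
  avg_op nu - T_g (Q (avg_op nu)); applying Q shows that Q (avg_op nu) is G-invariant.\<close>
lemma lift_op_invariant:
  assumes nu: "\<nu> \<in> LDQ" and g: "g \<in> K"
  shows "Tgdd act z0 g (lift_op \<nu>) = lift_op \<nu>"
proof -
  define \<psi> where "\<psi> = avg_op \<nu>"
  have psi: "\<psi> \<in> LDM" unfolding \<psi>_def by (rule avg_op_LipDual(1)[OF nu])
  have Qpsi: "Q \<psi> \<in> LDM" by (rule Q_LipDual[OF psi])
  have "Q (\<lambda>f. \<psi> f - Q \<psi> f) = zerof"
    using Q_diff[OF psi Qpsi] Q_proj psi by (simp add: zerof_def)
  then have "Q (Tgdd act z0 g (\<lambda>f. \<psi> f - Q \<psi> f)) = zerof"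
    using Q_ker g Mz.LipDual_diff[OF psi Qpsi] by blast
  moreover have "Tgdd act z0 g (\<lambda>f. \<psi> f - Q \<psi> f) = (\<lambda>f. \<psi> f - Tgdd act z0 g (Q \<psi>) f)"
    unfolding Tgdd_diff using avg_op_invariant[OF g] by (simp add: \<psi>_def)
  moreover have "Q (Tgdd act z0 g (Q \<psi>)) = Tgdd act z0 g (Q \<psi>)"
    by (rule Q_id_on_Free[OF Tgdd_Free[OF g Q_Free[OF psi]]])
  ultimately have "(\<lambda>f. Q \<psi> f - Tgdd act z0 g (Q \<psi>) f) = zerof"
    using Q_diff[OF psi Tgdd_LipDual[OF g Qpsi]] by simp
  then show ?thesis unfolding lift_op_def \<psi>_def[symmetric] by (simp add: fun_eq_iff zerof_def)
qed

lemma PG_lift_op: "\<nu> \<in> LDQ \<Longrightarrow> PGo (lift_op \<nu>) = lift_op \<nu>"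
  using RG_fixed[OF lift_op_Free lift_op_invariant] Q_id_on_Free[OF lift_op_Free] by (simp add: PG_def)

lemma PG_eq: "\<mu> \<in> FM \<Longrightarrow> PGo \<mu> = lift_op (quot_op \<mu>)"
  by (simp add: PG_def lift_op_def RG_eq)

lemma PG_Free: "\<mu> \<in> FM \<Longrightarrow> PGo \<mu> \<in> FM"
  by (simp add: PG_eq lift_op_Free quot_op_LipDual Mz.Free_LipDual)

lemma PG_add: "\<mu> \<in> FM \<Longrightarrow> \<mu>' \<in> FM \<Longrightarrow> PGo (\<lambda>f. \<mu> f + \<mu>' f) = (\<lambda>f. PGo \<mu> f + PGo \<mu>' f)"
  by (simp add: PG_eq Mz.Free_add quot_op_add lift_op_add quot_op_LipDual Mz.Free_LipDual)

lemma PG_scale: "\<mu> \<in> FM \<Longrightarrow> PGo (\<lambda>f. c * \<mu> f) = (\<lambda>f. c * PGo \<mu> f)"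
  by (simp add: PG_eq Mz.Free_scale quot_op_scale lift_op_scale quot_op_LipDual Mz.Free_LipDual)

lemma PG_diff: "\<mu> \<in> FM \<Longrightarrow> \<mu>' \<in> FM \<Longrightarrow> PGo (\<lambda>f. \<mu> f - \<mu>' f) = (\<lambda>f. PGo \<mu> f - PGo \<mu>' f)"
  by (simp add: PG_eq Mz.Free_diff quot_op_diff lift_op_diff quot_op_LipDual Mz.Free_LipDual)

lemma PG_idempotent: "\<mu> \<in> FM \<Longrightarrow> PGo (PGo \<mu>) = PGo \<mu>"
  by (simp add: PG_eq PG_lift_op quot_op_LipDual Mz.Free_LipDual)

lemma PG_bound:
  assumes mu: "\<mu> \<in> FM" shows "fnM (PGo \<mu>) \<le> opQ * fnM \<mu>"
proof -
  have "\<mu> \<in> LDM" by (rule Mz.Free_LipDual[OF mu])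
  then show ?thesis
    using lift_op_bound[OF quot_op_LipDual(1)] mult_left_mono[OF quot_op_LipDual(2) opnorm_nonneg]
    unfolding PG_eq[OF mu] by (meson order_trans)
qed

lemma PG_projection:
  "PGo ` FM \<subseteq> FM \<and> lin_on FM PGo \<and> (\<exists>C. \<forall>\<mu>\<in>FM. fnM (PGo \<mu>) \<le> C * fnM \<mu>)
    \<and> (\<forall>\<mu>\<in>FM. PGo (PGo \<mu>) = PGo \<mu>)"
  using PG_Free PG_add PG_scale PG_bound PG_idempotent unfolding lin_on_def by blast

lemma quot_op_apply: "h \<in> LQ \<Longrightarrow> quot_op \<mu> h = \<mu> (Psi G act h)"
  by (simp add: quot_op_def lip_adjoint_def)

context
  fixes Y :: "('a set \<Rightarrow> real) set"
  assumes Y_sub: "Y \<subseteq> LQ"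
    and Y_sep: "\<forall>\<nu>\<in>FQ. \<nu> \<noteq> zerof \<longrightarrow> (\<exists>f\<in>Y. \<nu> f \<noteq> 0)"
    and ker_sub: "{\<mu> \<in> FM. PGo \<mu> = zerof} \<subseteq> preannih UNIV dist z0 (Psi G act ` Y)"
begin

lemma kernel_PG_eq: "{\<mu> \<in> FM. PGo \<mu> = zerof} = preannih UNIV dist z0 (Lip0G G act z0)"
proof (intro equalityI subsetI)
  fix \<mu> assume "\<mu> \<in> {\<mu> \<in> FM. PGo \<mu> = zerof}"
  then have mu: "\<mu> \<in> FM" and ker: "PGo \<mu> = zerof" by auto
  have "quot_op \<mu> y = 0" if "y \<in> Y" for y
    using ker_sub mu ker that quot_op_apply[OF subsetD[OF Y_sub that]] by (auto simp: preannih_def)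
  then have "quot_op \<mu> = zerof" using Y_sep quot_op_Free[OF mu] by blast
  then have "\<mu> f = 0" if f: "f \<in> Lip0G G act z0" for f
  proof -
    have fL: "f \<in> LM" using f by (simp add: Lip0G_def)
    then have "\<mu> f = quot_op \<mu> (avg_quot f)"
      using Avg.maps_Lip0 Psi_avg_quot average_id_on_Lip0G[OF f] by (simp add: quot_op_apply)
    then show ?thesis using \<open>quot_op \<mu> = zerof\<close> by (simp add: zerof_def)
  qed
  then show "\<mu> \<in> preannih UNIV dist z0 (Lip0G G act z0)" using mu by (simp add: preannih_def)
next
  fix \<mu> assume "\<mu> \<in> preannih UNIV dist z0 (Lip0G G act z0)"
  then have mu: "\<mu> \<in> FM" and ann: "\<And>f. f \<in> Lip0G G act z0 \<Longrightarrow> \<mu> f = 0" by (auto simp: preannih_def)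
  have "avg_op (quot_op \<mu>) = zerof"
    using ann[OF average_Lip0G] Avg.maps_Lip0
    by (auto simp: fun_eq_iff avg_op_def lip_adjoint_def quot_op_apply Psi_avg_quot zerof_def)
  then show "\<mu> \<in> {\<mu> \<in> FM. PGo \<mu> = zerof}" using PG_eq[OF mu] Q_zerof mu by (simp add: lift_op_def)
qed

text \<open>On the span of the deltas, T and S are inverse on Y: writing psi = S mu, the element mu - P_G mu
  of ker P_G annihilates Psi(Y).\<close>
lemma lift_op_Psi_DeltaSpan:
  assumes psi: "\<psi> \<in> DSQ" and y: "y \<in> Y"
  shows "lift_op \<psi> (Psi G act y) = \<psi> y"
proof -
  obtain \<mu> where mu: "\<mu> \<in> DSM" "quot_op \<mu> = \<psi>" using DeltaSpan_quot_lift[OF psi] by blast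
  have muF: "\<mu> \<in> FM" by (rule Mz.DeltaSpan_Free[OF mu(1)])
  have "PGo (\<lambda>f. \<mu> f - PGo \<mu> f) = zerof"
    using PG_diff[OF muF PG_Free[OF muF]] PG_idempotent[OF muF] by (simp add: zerof_def)
  then have "\<mu> (Psi G act y) - PGo \<mu> (Psi G act y) = 0"
    using ker_sub Mz.Free_diff[OF muF PG_Free[OF muF]] y by (auto simp: preannih_def)
  then show ?thesis using PG_eq[OF muF] mu(2) y Y_sub by (auto simp: quot_op_apply)
qed

lemma lift_op_Psi:
  assumes nu: "\<nu> \<in> FQ" and y: "y \<in> Y"
  shows "lift_op \<nu> (Psi G act y) = \<nu> y"
proof -
  have yL: "y \<in> LQ" using y Y_sub by blast
  have nuL: "\<nu> \<in> LDQ" by (rule Qz.Free_LipDual[OF nu])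
  define L where "L = (1 + opQ) * lcQ y"
  have L: "L \<ge> 0" unfolding L_def using opnorm_nonneg Qz.lipconst_nonneg[OF yL] by simp
  have "\<bar>lift_op \<nu> (Psi G act y) - \<nu> y\<bar> \<le> 0 + e" if e: "e > 0" for e
  proof -
    obtain \<psi> where psi: "\<psi> \<in> DSQ" "fnQ (\<lambda>h. \<nu> h - \<psi> h) < e / (L + 1)"
      using Qz.Free_approx[OF nu, of "e / (L + 1)"] e L by auto
    have psiL: "\<psi> \<in> LDQ" by (rule Qz.DeltaSpan_LipDual[OF psi(1)])
    have \<delta>: "(\<lambda>h. \<psi> h - \<nu> h) \<in> LDQ" by (rule Qz.LipDual_diff[OF psiL nuL])
    have "\<bar>\<psi> y - \<nu> y\<bar> \<le> fnQ (\<lambda>h. \<psi> h - \<nu> h) * lcQ y" using Qz.fnorm_bound[OF \<delta> yL] by simp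
    moreover have "\<bar>lift_op \<nu> (Psi G act y) - lift_op \<psi> (Psi G act y)\<bar>
        \<le> opQ * fnQ (\<lambda>h. \<psi> h - \<nu> h) * lcQ y"
    proof -
      have "\<bar>lift_op \<nu> (Psi G act y) - lift_op \<psi> (Psi G act y)\<bar>
          \<le> fnM (lift_op (\<lambda>h. \<psi> h - \<nu> h)) * lcM (Psi G act y)"
        using Mz.fnorm_bound[OF Mz.Free_LipDual[OF lift_op_Free[OF \<delta>]] Psi.maps_Lip0[OF yL]]
        by (simp add: lift_op_diff[OF psiL nuL] abs_minus_commute)
      also have "\<dots> \<le> (opQ * fnQ (\<lambda>h. \<psi> h - \<nu> h)) * lcQ y"
        using lift_op_bound[OF \<delta>] Psi.nonexpansive[OF yL] opnorm_nonneg Qz.fnorm_nonneg[OF \<delta>]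
          Mz.lipconst_nonneg[OF Psi.maps_Lip0[OF yL]]
        by (intro mult_mono) auto
      finally show ?thesis .
    qed
    ultimately have "\<bar>lift_op \<nu> (Psi G act y) - \<nu> y\<bar> \<le> fnQ (\<lambda>h. \<nu> h - \<psi> h) * L"
      using lift_op_Psi_DeltaSpan[OF psi(1) y] unfolding L_def Qz.fnorm_diff_commute[of \<psi>]
      by (simp add: algebra_simps)
    also have "\<dots> \<le> e / (L + 1) * L" using psi(2) L by (intro mult_right_mono) auto
    also have "\<dots> \<le> e" using e L by (simp add: field_simps)
    finally show ?thesis by simp
  qed
  then show ?thesis using field_le_epsilon[of "\<bar>lift_op \<nu> (Psi G act y) - \<nu> y\<bar>" 0] by simp
qed

lemma quot_op_lift_op: assumes nu: "\<nu> \<in> FQ" shows "quot_op (lift_op \<nu>) = \<nu>"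
proof -
  have diff: "(\<lambda>h. \<nu> h - quot_op (lift_op \<nu>) h) \<in> FQ"
    by (rule Qz.Free_diff[OF nu quot_op_Free[OF lift_op_Free[OF Qz.Free_LipDual[OF nu]]]])
  have "\<nu> y - quot_op (lift_op \<nu>) y = 0" if "y \<in> Y" for y
    using lift_op_Psi[OF nu that] that Y_sub by (auto simp: quot_op_apply)
  then have "(\<lambda>h. \<nu> h - quot_op (lift_op \<nu>) h) = zerof" using Y_sep diff by blast
  then show ?thesis by (simp add: fun_eq_iff zerof_def)
qed

lemma free_quot_isomorphism:
  "\<exists>T S. lin_on FQ T \<and> T ` FQ = PGo ` FM \<and> (\<forall>x. T (dQ (orb x)) = PGo (dM x))
     \<and> (\<forall>\<nu>\<in>FQ. fnM (T \<nu>) \<le> opQ * fnQ \<nu>)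
     \<and> lin_on FM S \<and> S ` FM \<subseteq> FQ \<and> (\<forall>x. S (dM x) = dQ (orb x)) \<and> (\<forall>\<mu>\<in>FM. fnQ (S \<mu>) \<le> fnM \<mu>)
     \<and> (\<forall>\<nu>\<in>FQ. S (T \<nu>) = \<nu>) \<and> (\<forall>\<mu>\<in>PGo ` FM. T (S \<mu>) = \<mu>)"
proof (intro exI[of _ lift_op] exI[of _ quot_op] conjI)
  show "lin_on FQ lift_op" unfolding lin_on_def using lift_op_add lift_op_scale Qz.Free_LipDual by blast
  show "lift_op ` FQ = PGo ` FM"
  proof
    show "lift_op ` FQ \<subseteq> PGo ` FM"
    proof
      fix z assume "z \<in> lift_op ` FQ"
      then obtain \<nu> where "\<nu> \<in> FQ" "z = lift_op \<nu>" by blast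
      then show "z \<in> PGo ` FM" using PG_lift_op lift_op_Free Qz.Free_LipDual by (metis image_eqI)
    qed
    show "PGo ` FM \<subseteq> lift_op ` FQ" using PG_eq quot_op_Free by auto
  qed
  show "\<forall>x. lift_op (dQ (orb x)) = PGo (dM x)" using PG_eq[OF Mz.delta_Free] quot_op_delta by simp
  show "\<forall>\<nu>\<in>FQ. fnM (lift_op \<nu>) \<le> opQ * fnQ \<nu>" using lift_op_bound Qz.Free_LipDual by blast
  show "lin_on FM quot_op" unfolding lin_on_def using quot_op_add quot_op_scale by blast
  show "quot_op ` FM \<subseteq> FQ" using quot_op_Free by blast
  show "\<forall>x. quot_op (dM x) = dQ (orb x)" using quot_op_delta by blast
  show "\<forall>\<mu>\<in>FM. fnQ (quot_op \<mu>) \<le> fnM \<mu>" using quot_op_LipDual(2) Mz.Free_LipDual by blast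
  show "\<forall>\<nu>\<in>FQ. quot_op (lift_op \<nu>) = \<nu>" using quot_op_lift_op by blast
  show "\<forall>\<mu>\<in>PGo ` FM. lift_op (quot_op \<mu>) = \<mu>" using PG_eq PG_Free PG_idempotent by auto
qed

end

end

lemma lipschitz_continuous_on:
  fixes f :: "'a::metric_space \<Rightarrow> real"
  assumes "\<And>a b. \<bar>f a - f b\<bar> \<le> C * dist a b"
  shows "continuous_on UNIV f"
proof (rule lipschitz_on_continuous_on)
  show "\<bar>C\<bar>-lipschitz_on UNIV f"
  proof (rule lipschitz_onI)
    fix x y :: 'a
    have "C * dist x y \<le> \<bar>C\<bar> * dist x y" by (simp add: mult_right_mono)
    then show "dist (f x) (f y) \<le> \<bar>C\<bar> * dist x y" using assms[of x y] by (simp add: dist_real_def)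
  qed simp
qed

lemma orbit_continuous_map:
  assumes act: "isometric_action \<tau> G act"
  shows "continuous_map \<tau> euclidean (\<lambda>k. act k x)"
proof -
  have c1: "continuous_map \<tau> (prod_topology \<tau> euclidean) (\<lambda>k. (k, x))"
    by (rule continuous_map_pairedI) auto
  have c2: "continuous_map (prod_topology \<tau> euclidean) euclidean (\<lambda>(g, x). act g x)"
    using act by (simp add: isometric_action_def)
  have "continuous_map \<tau> euclidean ((\<lambda>(g, x). act g x) \<circ> (\<lambda>k. (k, x)))"
    by (rule continuous_map_compose[OF c1 c2])
  then show ?thesis by (simp add: o_def)
qed

lemma orbit_fun_bounded:
  fixes f :: "'a::metric_space \<Rightarrow> real" and act :: "'g \<Rightarrow> 'a \<Rightarrow> 'a"
  assumes lip: "\<And>a b. \<bar>f a - f b\<bar> \<le> C * dist a b" and bd: "bounded ((\<lambda>g. act g x) ` K)"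
  shows "\<exists>B. \<forall>k\<in>K. \<bar>f (act k x)\<bar> \<le> B"
proof -
  obtain B where B: "\<forall>y\<in>(\<lambda>g. act g x) ` K. dist x y \<le> B" using bd bounded_any_center by blast
  have "\<bar>f (act k x)\<bar> \<le> \<bar>C\<bar> * B + \<bar>f x\<bar>" if k: "k \<in> K" for k
  proof -
    have d: "dist (act k x) x \<le> B" using B k by (simp add: dist_commute)
    have "\<bar>f (act k x) - f x\<bar> \<le> C * dist (act k x) x" by (rule lip)
    also have "\<dots> \<le> \<bar>C\<bar> * dist (act k x) x" by (simp add: mult_right_mono)
    also have "\<dots> \<le> \<bar>C\<bar> * B" by (rule mult_left_mono[OF d]) simp
    finally show ?thesis by linarith
  qed
  then show ?thesis by blast
qed

section \<open>The SIN case: bounded uniformly continuous functions\<close>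

lemma mem_BUC_iff: "F \<in> BUC \<tau> G \<longleftrightarrow> (\<exists>C. \<forall>g\<in>carrier G. \<bar>F g\<bar> \<le> C) \<and>
      (\<forall>e>0. \<exists>U. openin \<tau> U \<and> \<one>\<^bsub>G\<^esub> \<in> U \<and>
         (\<forall>g\<in>carrier G. \<forall>h\<in>U. \<bar>F (g \<otimes>\<^bsub>G\<^esub> h) - F g\<bar> < e \<and> \<bar>F (h \<otimes>\<^bsub>G\<^esub> g) - F g\<bar> < e))"
  by (simp add: BUC_def)

context
  fixes \<tau> :: "'g topology" and G :: "('g, 'x) monoid_scheme"
  assumes tg: "topological_group \<tau> G"
begin

lemma topological_group_group: "group G" using tg by (simp add: topological_group_def)
lemma topological_group_topspace: "topspace \<tau> = carrier G" using tg by (simp add: topological_group_def)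

lemma openin_carrier: "openin \<tau> U \<Longrightarrow> h \<in> U \<Longrightarrow> h \<in> carrier G"
  using openin_subset topological_group_topspace by blast

lemma topological_group_mult_closed: "g \<in> carrier G \<Longrightarrow> h \<in> carrier G \<Longrightarrow> g \<otimes>\<^bsub>G\<^esub> h \<in> carrier G"
  by (rule monoid.m_closed[OF group.is_monoid[OF topological_group_group]])

lemma topological_group_one_closed: "\<one>\<^bsub>G\<^esub> \<in> carrier G"
  by (rule monoid.one_closed[OF group.is_monoid[OF topological_group_group]])

lemma BUC_add: assumes F: "F \<in> BUC \<tau> G" and F': "F' \<in> BUC \<tau> G"
  shows "(\<lambda>g. F g + F' g) \<in> BUC \<tau> G"
proof -
  obtain C where C: "\<forall>g\<in>carrier G. \<bar>F g\<bar> \<le> C" using F by (auto simp: mem_BUC_iff)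
  obtain C' where C': "\<forall>g\<in>carrier G. \<bar>F' g\<bar> \<le> C'" using F' by (auto simp: mem_BUC_iff)
  have b: "\<forall>g\<in>carrier G. \<bar>F g + F' g\<bar> \<le> C + C'" using C C' by (smt (verit))
  have u: "\<exists>U. openin \<tau> U \<and> \<one>\<^bsub>G\<^esub> \<in> U \<and>
         (\<forall>g\<in>carrier G. \<forall>h\<in>U. \<bar>(F (g \<otimes>\<^bsub>G\<^esub> h) + F' (g \<otimes>\<^bsub>G\<^esub> h)) - (F g + F' g)\<bar> < e
            \<and> \<bar>(F (h \<otimes>\<^bsub>G\<^esub> g) + F' (h \<otimes>\<^bsub>G\<^esub> g)) - (F g + F' g)\<bar> < e)"
    if e: "e > 0" for e
  proof -
    have e2: "e/2 > 0" using e by simp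
    obtain U where U: "openin \<tau> U" "\<one>\<^bsub>G\<^esub> \<in> U"
      "\<forall>g\<in>carrier G. \<forall>h\<in>U. \<bar>F (g \<otimes>\<^bsub>G\<^esub> h) - F g\<bar> < e/2 \<and> \<bar>F (h \<otimes>\<^bsub>G\<^esub> g) - F g\<bar> < e/2"
      using F e2 unfolding mem_BUC_iff by blast
    obtain U' where U': "openin \<tau> U'" "\<one>\<^bsub>G\<^esub> \<in> U'"
      "\<forall>g\<in>carrier G. \<forall>h\<in>U'. \<bar>F' (g \<otimes>\<^bsub>G\<^esub> h) - F' g\<bar> < e/2 \<and> \<bar>F' (h \<otimes>\<^bsub>G\<^esub> g) - F' g\<bar> < e/2"
      using F' e2 unfolding mem_BUC_iff by blast
    have "\<forall>g\<in>carrier G. \<forall>h\<in>U \<inter> U'. \<bar>(F (g \<otimes>\<^bsub>G\<^esub> h) + F' (g \<otimes>\<^bsub>G\<^esub> h)) - (F g + F' g)\<bar> < e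
            \<and> \<bar>(F (h \<otimes>\<^bsub>G\<^esub> g) + F' (h \<otimes>\<^bsub>G\<^esub> g)) - (F g + F' g)\<bar> < e"
    proof (intro ballI)
      fix g h assume g: "g \<in> carrier G" and h: "h \<in> U \<inter> U'"
      have "\<bar>F (g \<otimes>\<^bsub>G\<^esub> h) - F g\<bar> < e/2" "\<bar>F (h \<otimes>\<^bsub>G\<^esub> g) - F g\<bar> < e/2"
           "\<bar>F' (g \<otimes>\<^bsub>G\<^esub> h) - F' g\<bar> < e/2" "\<bar>F' (h \<otimes>\<^bsub>G\<^esub> g) - F' g\<bar> < e/2"
        using U(3) U'(3) g h by auto
      then show "\<bar>(F (g \<otimes>\<^bsub>G\<^esub> h) + F' (g \<otimes>\<^bsub>G\<^esub> h)) - (F g + F' g)\<bar> < e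
            \<and> \<bar>(F (h \<otimes>\<^bsub>G\<^esub> g) + F' (h \<otimes>\<^bsub>G\<^esub> g)) - (F g + F' g)\<bar> < e" by linarith
    qed
    then show ?thesis using U(1,2) U'(1,2) openin_Int by blast
  qed
  show ?thesis unfolding mem_BUC_iff using b u by blast
qed

lemma BUC_scale: assumes F: "F \<in> BUC \<tau> G" shows "(\<lambda>g. c * F g) \<in> BUC \<tau> G"
proof -
  obtain C where C: "\<forall>g\<in>carrier G. \<bar>F g\<bar> \<le> C" using F by (auto simp: mem_BUC_iff)
  have b: "\<forall>g\<in>carrier G. \<bar>c * F g\<bar> \<le> \<bar>c\<bar> * C" using C by (simp add: abs_mult mult_left_mono)
  have u: "\<exists>U. openin \<tau> U \<and> \<one>\<^bsub>G\<^esub> \<in> U \<and>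
         (\<forall>g\<in>carrier G. \<forall>h\<in>U. \<bar>c * F (g \<otimes>\<^bsub>G\<^esub> h) - c * F g\<bar> < e \<and> \<bar>c * F (h \<otimes>\<^bsub>G\<^esub> g) - c * F g\<bar> < e)"
    if e: "e > 0" for e
  proof -
    have e2: "e/(\<bar>c\<bar>+1) > 0" using e by simp
    obtain U where U: "openin \<tau> U" "\<one>\<^bsub>G\<^esub> \<in> U"
      "\<forall>g\<in>carrier G. \<forall>h\<in>U. \<bar>F (g \<otimes>\<^bsub>G\<^esub> h) - F g\<bar> < e/(\<bar>c\<bar>+1) \<and> \<bar>F (h \<otimes>\<^bsub>G\<^esub> g) - F g\<bar> < e/(\<bar>c\<bar>+1)"
      using F e2 unfolding mem_BUC_iff by blast
    have k: "\<bar>c * a - c * b\<bar> < e" if "\<bar>a - b\<bar> < e/(\<bar>c\<bar>+1)" for a b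
    proof -
      have "\<bar>c * a - c * b\<bar> = \<bar>c\<bar> * \<bar>a - b\<bar>" by (simp add: abs_mult[symmetric] algebra_simps)
      also have "\<dots> \<le> \<bar>c\<bar> * (e/(\<bar>c\<bar>+1))" using that by (intro mult_left_mono) auto
      also have "\<dots> < e" using e by (simp add: field_simps)
      finally show ?thesis .
    qed
    show ?thesis using U k by blast
  qed
  show ?thesis unfolding mem_BUC_iff using b u by blast
qed

lemma BUC_const: "(\<lambda>g. c) \<in> BUC \<tau> G"
  unfolding mem_BUC_iff using topological_group_one_closed topological_group_topspace by (auto intro!: exI[of _ "topspace \<tau>"])

lemma BUC_uniform_limit:
  assumes b: "\<And>g. g \<in> carrier G \<Longrightarrow> \<bar>F g\<bar> \<le> C"
    and ap: "\<And>e. e > 0 \<Longrightarrow> \<exists>F'\<in>BUC \<tau> G. \<forall>g\<in>carrier G. \<bar>F g - F' g\<bar> \<le> e"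
  shows "F \<in> BUC \<tau> G"
proof -
  have u: "\<exists>U. openin \<tau> U \<and> \<one>\<^bsub>G\<^esub> \<in> U \<and>
         (\<forall>g\<in>carrier G. \<forall>h\<in>U. \<bar>F (g \<otimes>\<^bsub>G\<^esub> h) - F g\<bar> < e \<and> \<bar>F (h \<otimes>\<^bsub>G\<^esub> g) - F g\<bar> < e)"
    if e: "e > 0" for e
  proof -
    have e3: "e/3 > 0" using e by simp
    obtain F' where F': "F' \<in> BUC \<tau> G" "\<forall>g\<in>carrier G. \<bar>F g - F' g\<bar> \<le> e/3"
      using ap[OF e3] by blast
    obtain U where U: "openin \<tau> U" "\<one>\<^bsub>G\<^esub> \<in> U"
      "\<forall>g\<in>carrier G. \<forall>h\<in>U. \<bar>F' (g \<otimes>\<^bsub>G\<^esub> h) - F' g\<bar> < e/3 \<and> \<bar>F' (h \<otimes>\<^bsub>G\<^esub> g) - F' g\<bar> < e/3"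
      using F'(1) e3 unfolding mem_BUC_iff by blast
    have "\<forall>g\<in>carrier G. \<forall>h\<in>U. \<bar>F (g \<otimes>\<^bsub>G\<^esub> h) - F g\<bar> < e \<and> \<bar>F (h \<otimes>\<^bsub>G\<^esub> g) - F g\<bar> < e"
    proof (intro ballI)
      fix g h assume g: "g \<in> carrier G" and h: "h \<in> U"
      have hK: "h \<in> carrier G" by (rule openin_carrier[OF U(1) h])
      have "\<bar>F (g \<otimes>\<^bsub>G\<^esub> h) - F' (g \<otimes>\<^bsub>G\<^esub> h)\<bar> \<le> e/3" "\<bar>F (h \<otimes>\<^bsub>G\<^esub> g) - F' (h \<otimes>\<^bsub>G\<^esub> g)\<bar> \<le> e/3"
           "\<bar>F g - F' g\<bar> \<le> e/3"
        using F'(2) g topological_group_mult_closed[OF g hK] topological_group_mult_closed[OF hK g] by auto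
      moreover have "\<bar>F' (g \<otimes>\<^bsub>G\<^esub> h) - F' g\<bar> < e/3" "\<bar>F' (h \<otimes>\<^bsub>G\<^esub> g) - F' g\<bar> < e/3"
        using U(3) g h by auto
      ultimately show "\<bar>F (g \<otimes>\<^bsub>G\<^esub> h) - F g\<bar> < e \<and> \<bar>F (h \<otimes>\<^bsub>G\<^esub> g) - F g\<bar> < e" by linarith
    qed
    then show ?thesis using U(1,2) by blast
  qed
  show ?thesis unfolding mem_BUC_iff using b u by blast
qed

lemma BUC_cong:
  assumes F: "F \<in> BUC \<tau> G" and eq: "\<And>g. g \<in> carrier G \<Longrightarrow> F g = F' g"
  shows "F' \<in> BUC \<tau> G"
proof -
  obtain C where C: "\<forall>g\<in>carrier G. \<bar>F g\<bar> \<le> C" using F by (auto simp: mem_BUC_iff)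
  show ?thesis
  proof (rule BUC_uniform_limit)
    show "\<bar>F' g\<bar> \<le> C" if "g \<in> carrier G" for g using C eq[OF that] that by auto
    show "\<exists>F''\<in>BUC \<tau> G. \<forall>g\<in>carrier G. \<bar>F' g - F'' g\<bar> \<le> e" if "e > 0" for e
      using F eq that by (intro bexI[of _ F]) auto
  qed
qed

lemma SIN_conjugation_invariant_nhd:
  assumes sin: "SIN \<tau> G" and U: "openin \<tau> U" "\<one>\<^bsub>G\<^esub> \<in> U"
  obtains V where "openin \<tau> V" "\<one>\<^bsub>G\<^esub> \<in> V" "V \<subseteq> U"
    "\<And>g h. g \<in> carrier G \<Longrightarrow> h \<in> V \<Longrightarrow> inv\<^bsub>G\<^esub> g \<otimes>\<^bsub>G\<^esub> h \<otimes>\<^bsub>G\<^esub> g \<in> V"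
proof -
  interpret group G by (rule topological_group_group)
  obtain V where V: "openin \<tau> V" "\<one>\<^bsub>G\<^esub> \<in> V" "V \<subseteq> U"
    "\<forall>g\<in>carrier G. (\<lambda>v. g \<otimes>\<^bsub>G\<^esub> v \<otimes>\<^bsub>G\<^esub> inv\<^bsub>G\<^esub> g) ` V = V"
    using sin[unfolded SIN_def, rule_format, OF conjI[OF U]] by (elim exE conjE) (rule that)
  have conj: "inv\<^bsub>G\<^esub> g \<otimes>\<^bsub>G\<^esub> h \<otimes>\<^bsub>G\<^esub> g \<in> V" if g: "g \<in> carrier G" and h: "h \<in> V" for g h
  proof -
    let ?c = "\<lambda>v. inv\<^bsub>G\<^esub> g \<otimes>\<^bsub>G\<^esub> v \<otimes>\<^bsub>G\<^esub> inv\<^bsub>G\<^esub> (inv\<^bsub>G\<^esub> g)"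
    have "?c h \<in> ?c ` V" using h by (rule imageI)
    then have "?c h \<in> V" unfolding V(4)[rule_format, OF inv_closed[OF g]] .
    then show ?thesis by (simp only: inv_inv[OF g])
  qed
  from V(1-3) conj show ?thesis by (rule that)
qed

end

lemma BUC_orbit_fun:
  fixes \<tau> :: "'g topology" and G :: "('g, 'x) monoid_scheme" and act :: "'g \<Rightarrow> 'a::metric_space \<Rightarrow> 'a"
    and f :: "'a \<Rightarrow> real"
  assumes tg: "topological_group \<tau> G" and act: "isometric_action \<tau> G act" and sin: "SIN \<tau> G"
    and bd: "bounded ((\<lambda>g. act g x) ` carrier G)"
    and lip: "\<And>a b. \<bar>f a - f b\<bar> \<le> C * dist a b"
  shows "(\<lambda>k. f (act k x)) \<in> BUC \<tau> G"
proof -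
  interpret grp: group G by (rule topological_group_group[OF tg])
  have act_one: "act \<one>\<^bsub>G\<^esub> y = y" for y using act by (simp add: isometric_action_def)
  have act_mult: "act (g \<otimes>\<^bsub>G\<^esub> h) y = act g (act h y)" if "g \<in> carrier G" "h \<in> carrier G" for g h y
    using act that by (simp add: isometric_action_def)
  have act_iso: "dist (act g y) (act g z) = dist y z" if "g \<in> carrier G" for g y z
    using act that by (simp add: isometric_action_def)
  obtain B where B: "\<forall>k\<in>carrier G. \<bar>f (act k x)\<bar> \<le> B"
    using orbit_fun_bounded[of f C act x "carrier G", OF lip bd] by blast
  have u: "\<exists>U. openin \<tau> U \<and> \<one>\<^bsub>G\<^esub> \<in> U \<and>
         (\<forall>g\<in>carrier G. \<forall>h\<in>U. \<bar>f (act (g \<otimes>\<^bsub>G\<^esub> h) x) - f (act g x)\<bar> < e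
            \<and> \<bar>f (act (h \<otimes>\<^bsub>G\<^esub> g) x) - f (act g x)\<bar> < e)"
    if e: "e > 0" for e
  proof -
    define \<delta> where "\<delta> = e / (\<bar>C\<bar> + 1)"
    have dp: "\<delta> > 0" using e by (simp add: \<delta>_def)
    define U0 where "U0 = {k \<in> topspace \<tau>. act k x \<in> ball x \<delta>}"
    have U0: "openin \<tau> U0" unfolding U0_def
      by (rule openin_continuous_map_preimage[OF orbit_continuous_map[OF act]]) simp
    have oneU0: "\<one>\<^bsub>G\<^esub> \<in> U0"
      using dp topological_group_one_closed[OF tg] topological_group_topspace[OF tg] act_one
      by (simp add: U0_def)
    obtain V where V: "openin \<tau> V" "\<one>\<^bsub>G\<^esub> \<in> V" "V \<subseteq> U0"
      "\<And>g h. g \<in> carrier G \<Longrightarrow> h \<in> V \<Longrightarrow> inv\<^bsub>G\<^esub> g \<otimes>\<^bsub>G\<^esub> h \<otimes>\<^bsub>G\<^esub> g \<in> V"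
      using SIN_conjugation_invariant_nhd[OF tg sin U0 oneU0] by blast
    have est: "\<bar>f (act g y) - f (act g x)\<bar> < e" if g: "g \<in> carrier G" and y: "dist y x < \<delta>" for g y
    proof -
      have "\<bar>f (act g y) - f (act g x)\<bar> \<le> C * dist y x" using lip[of "act g y" "act g x"] act_iso[OF g] by simp
      also have "\<dots> \<le> \<bar>C\<bar> * dist y x" by (simp add: mult_right_mono)
      also have "\<dots> \<le> \<bar>C\<bar> * \<delta>" using y by (intro mult_left_mono) auto
      also have "\<dots> < e" using e by (simp add: \<delta>_def field_simps)
      finally show ?thesis .
    qed
    have inV: "dist (act h x) x < \<delta>" if "h \<in> V" for h
      using that V(3) by (auto simp: U0_def dist_commute)
    have "\<forall>g\<in>carrier G. \<forall>h\<in>V. \<bar>f (act (g \<otimes>\<^bsub>G\<^esub> h) x) - f (act g x)\<bar> < e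
            \<and> \<bar>f (act (h \<otimes>\<^bsub>G\<^esub> g) x) - f (act g x)\<bar> < e"
    proof (intro ballI conjI)
      fix g h assume g: "g \<in> carrier G" and h: "h \<in> V"
      have hK: "h \<in> carrier G" by (rule openin_carrier[OF tg V(1) h])
      show "\<bar>f (act (g \<otimes>\<^bsub>G\<^esub> h) x) - f (act g x)\<bar> < e"
        using est[OF g inV[OF h]] act_mult[OF g hK] by simp
      txt \<open>Right translation by h is left translation by the conjugate w, which SIN keeps in V.\<close>
      define w where "w = inv\<^bsub>G\<^esub> g \<otimes>\<^bsub>G\<^esub> h \<otimes>\<^bsub>G\<^esub> g"
      have wV: "w \<in> V" unfolding w_def by (rule V(4)[OF g h])
      have wK: "w \<in> carrier G" by (rule openin_carrier[OF tg V(1) wV])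
      have "g \<otimes>\<^bsub>G\<^esub> w = h \<otimes>\<^bsub>G\<^esub> g" using g hK unfolding w_def by (simp add: grp.m_assoc[symmetric])
      then have "act (h \<otimes>\<^bsub>G\<^esub> g) x = act g (act w x)" using act_mult[OF g wK] by simp
      then show "\<bar>f (act (h \<otimes>\<^bsub>G\<^esub> g) x) - f (act g x)\<bar> < e"
        using est[OF g inV[OF wV]] by simp
    qed
    then show ?thesis using V(1,2) by blast
  qed
  show ?thesis unfolding mem_BUC_iff using B u by blast
qed

section \<open>The locally compact case: essentially bounded functions\<close>

context
  fixes \<tau> :: "'g topology" and G :: "('g, 'x) monoid_scheme" and H :: "'g measure"
  assumes tg: "topological_group \<tau> G" and haar: "left_haar_measure \<tau> G H"
begin

lemma haar_space: "space H = carrier G" using haar topological_group_topspace[OF tg] by (simp add: left_haar_measure_def)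
lemma haar_sets: "sets H = sigma_sets (topspace \<tau>) {U. openin \<tau> U}" using haar by (simp add: left_haar_measure_def)

lemma Linf_cong: assumes F: "F \<in> Linf H" and eq: "\<And>g. g \<in> carrier G \<Longrightarrow> F g = F' g"
  shows "F' \<in> Linf H"
proof -
  obtain C where C: "AE g in H. \<bar>F g\<bar> \<le> C" using F by (auto simp: Linf_def)
  have "AE g in H. \<bar>F' g\<bar> \<le> C" by (rule AE_mp[OF C AE_I2]) (simp add: haar_space eq)
  moreover have "F' \<in> borel_measurable H"
    using F measurable_cong[of H F F' borel] eq by (simp add: haar_space Linf_def)
  ultimately show ?thesis by (auto simp: Linf_def)
qed

lemma Linf_add: assumes F: "F \<in> Linf H" and F': "F' \<in> Linf H" shows "(\<lambda>g. F g + F' g) \<in> Linf H"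
proof -
  obtain C where C: "AE g in H. \<bar>F g\<bar> \<le> C" using F by (auto simp: Linf_def)
  obtain C' where C': "AE g in H. \<bar>F' g\<bar> \<le> C'" using F' by (auto simp: Linf_def)
  have "AE g in H. \<bar>F g + F' g\<bar> \<le> C + C'" by (rule AE_mp[OF AE_conjI[OF C C']]) auto
  moreover have "(\<lambda>g. F g + F' g) \<in> borel_measurable H" using F F' by (auto simp: Linf_def)
  ultimately show ?thesis by (auto simp: Linf_def)
qed

lemma Linf_scale: assumes F: "F \<in> Linf H" shows "(\<lambda>g. c * F g) \<in> Linf H"
proof -
  obtain C where C: "AE g in H. \<bar>F g\<bar> \<le> C" using F by (auto simp: Linf_def)
  have "AE g in H. \<bar>c * F g\<bar> \<le> \<bar>c\<bar> * C" by (rule AE_mp[OF C]) (auto simp: abs_mult mult_left_mono)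
  moreover have "(\<lambda>g. c * F g) \<in> borel_measurable H" using F by (auto simp: Linf_def)
  ultimately show ?thesis by (auto simp: Linf_def)
qed

lemma Linf_const: "(\<lambda>g. c) \<in> Linf H"
  by (auto simp: Linf_def intro!: exI[of _ "\<bar>c\<bar>"])

lemma Linf_uniform_limit:
  assumes b: "\<And>g. g \<in> carrier G \<Longrightarrow> \<bar>F g\<bar> \<le> C"
    and ap: "\<And>e. e > 0 \<Longrightarrow> \<exists>F'\<in>Linf H. \<forall>g\<in>carrier G. \<bar>F g - F' g\<bar> \<le> e"
  shows "F \<in> Linf H"
proof -
  define Fn where "Fn = (\<lambda>n. SOME F'. F' \<in> Linf H \<and> (\<forall>g\<in>carrier G. \<bar>F g - F' g\<bar> \<le> inverse (real (Suc n))))"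
  have Fn: "Fn n \<in> Linf H \<and> (\<forall>g\<in>carrier G. \<bar>F g - Fn n g\<bar> \<le> inverse (real (Suc n)))" for n
  proof -
    have "\<exists>F'. F' \<in> Linf H \<and> (\<forall>g\<in>carrier G. \<bar>F g - F' g\<bar> \<le> inverse (real (Suc n)))"
      using ap[of "inverse (real (Suc n))"] by auto
    then show ?thesis unfolding Fn_def by (rule someI_ex)
  qed
  have lim: "(\<lambda>n. Fn n g) \<longlonglongrightarrow> F g" if g: "g \<in> space H" for g
  proof (rule metric_LIMSEQ_I)
    fix r :: real assume r: "r > 0"
    obtain no where no: "inverse (real (Suc no)) < r" using reals_Archimedean[OF r] by auto
    have "dist (Fn n g) (F g) < r" if n: "n \<ge> no" for n
    proof -
      have "dist (Fn n g) (F g) \<le> inverse (real (Suc n))"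
        using Fn[of n] g haar_space by (auto simp: dist_real_def abs_minus_commute)
      also have "\<dots> \<le> inverse (real (Suc no))" using n by (simp add: field_simps)
      finally show ?thesis using no by linarith
    qed
    then show "\<exists>no. \<forall>n\<ge>no. dist (Fn n g) (F g) < r" by blast
  qed
  have "F \<in> borel_measurable H"
    by (rule borel_measurable_LIMSEQ_real[OF lim]) (use Fn in \<open>auto simp: Linf_def\<close>)
  moreover have "AE g in H. \<bar>F g\<bar> \<le> C" by (rule AE_I2) (simp add: haar_space b)
  ultimately show ?thesis by (auto simp: Linf_def)
qed

lemma continuous_map_Linf:
  assumes c: "continuous_map \<tau> euclidean (F :: 'g \<Rightarrow> real)" and b: "\<And>g. g \<in> carrier G \<Longrightarrow> \<bar>F g\<bar> \<le> C"
  shows "F \<in> Linf H"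
proof -
  have "F \<in> borel_measurable H"
  proof (rule borel_measurableI)
    fix S :: "real set" assume S: "open S"
    have "openin \<tau> {x \<in> topspace \<tau>. F x \<in> S}"
      by (rule openin_continuous_map_preimage[OF c]) (use S in simp)
    moreover have "F -` S \<inter> space H = {x \<in> topspace \<tau>. F x \<in> S}" using haar_space topological_group_topspace[OF tg] by auto
    ultimately show "F -` S \<inter> space H \<in> sets H" unfolding haar_sets by (auto intro: sigma_sets.Basic)
  qed
  moreover have "AE g in H. \<bar>F g\<bar> \<le> C" by (rule AE_I2) (simp add: haar_space b)
  ultimately show ?thesis by (auto simp: Linf_def)
qed

end

lemma orbit_fun_continuous:
  fixes act :: "'g \<Rightarrow> 'a::metric_space \<Rightarrow> 'a" and f :: "'a \<Rightarrow> real"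
  assumes act: "isometric_action \<tau> G act" and lip: "\<And>a b. \<bar>f a - f b\<bar> \<le> C * dist a b"
  shows "continuous_map \<tau> euclidean (\<lambda>k. f (act k x))"
proof -
  have "continuous_map \<tau> euclidean (f \<circ> (\<lambda>k. act k x))"
    by (rule continuous_map_compose[OF orbit_continuous_map[OF act]]) (simp add: lipschitz_continuous_on[OF lip])
  then show ?thesis by (simp add: o_def)
qed

lemma BUC_invariant_mean:
  assumes tg: "topological_group \<tau> G" and mean: "bi_invariant_mean_BUC \<tau> G M"
  shows "invariant_mean G (BUC \<tau> G) M"
proof -
  note m = mean[unfolded bi_invariant_mean_BUC_def]
  show ?thesis
  proof (rule invariant_mean.intro)
    show "M F = M F'" if "F \<in> BUC \<tau> G" "F' \<in> BUC \<tau> G" "\<And>g. g \<in> carrier G \<Longrightarrow> F g = F' g" for F F'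
      using m that by blast
    show "M F \<ge> 0" if "F \<in> BUC \<tau> G" "\<And>g. g \<in> carrier G \<Longrightarrow> F g \<ge> 0" for F
      using m that by blast
  qed (fact topological_group_group[OF tg] BUC_cong[OF tg] BUC_add[OF tg] BUC_scale[OF tg]
        BUC_const[OF tg] BUC_uniform_limit[OF tg] | use m in blast)+
qed

lemma Linf_invariant_mean:
  assumes tg: "topological_group \<tau> G" and haar: "left_haar_measure \<tau> G H"
    and mean: "bi_invariant_mean_Linf G H M"
  shows "invariant_mean G (Linf H) M"
proof -
  note m = mean[unfolded bi_invariant_mean_Linf_def]
  have AE: "AE g in H. P g" if "\<And>g. g \<in> carrier G \<Longrightarrow> P g" for P
    using that by (intro AE_I2) (simp add: haar_space[OF tg haar])
  show ?thesis
  proof (rule invariant_mean.intro)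
    show "M F = M F'" if "F \<in> Linf H" "F' \<in> Linf H" "\<And>g. g \<in> carrier G \<Longrightarrow> F g = F' g" for F F'
      using m that AE[of "\<lambda>g. F g = F' g"] by blast
    show "M F \<ge> 0" if "F \<in> Linf H" "\<And>g. g \<in> carrier G \<Longrightarrow> F g \<ge> 0" for F
      using m that AE[of "\<lambda>g. F g \<ge> 0"] by blast
  qed (fact topological_group_group[OF tg] Linf_cong[OF tg haar] Linf_add[OF tg haar]
        Linf_scale[OF tg haar] Linf_const[OF tg haar] Linf_uniform_limit[OF tg haar] | use m in blast)+
qed

lemma mean_action_of_invariant_mean:
  assumes mean: "invariant_mean G D M" and act: "isometric_action \<tau> G act"
    and orbit: "\<And>f C x. (\<And>a b. \<bar>f a - f b\<bar> \<le> C * dist a b) \<Longrightarrow> (\<lambda>k. f (act k x)) \<in> D"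
  shows "mean_action G D M act"
  using act unfolding isometric_action_def
  by (intro mean_action.intro[OF mean] mean_action_axioms.intro orbit) auto

lemma mean_action_exists:
  assumes tg: "topological_group \<tau> G"
    and lc_or_sin:
      "(SIN \<tau> G \<and> bi_invariant_mean_BUC \<tau> G M)
       \<or> (locally_compact_space \<tau> \<and>
          (\<exists>H. left_haar_measure \<tau> G H \<and> bi_invariant_mean_Linf G H M))"
    and act: "isometric_action \<tau> G act"
    and bdd_orbits: "\<forall>x. bounded ((\<lambda>g. act g x) ` carrier G)"
  shows "\<exists>D. mean_action G D M act"
  using lc_or_sin
proof (elim disjE conjE exE)
  assume sin: "SIN \<tau> G" and mean: "bi_invariant_mean_BUC \<tau> G M"
  have "mean_action G (BUC \<tau> G) M act"
    by (rule mean_action_of_invariant_mean[OF BUC_invariant_mean[OF tg mean] act])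
      (rule BUC_orbit_fun[OF tg act sin bdd_orbits[rule_format]])
  then show ?thesis ..
next
  fix H assume haar: "left_haar_measure \<tau> G H" and mean: "bi_invariant_mean_Linf G H M"
  have "(\<lambda>k. f (act k x)) \<in> Linf H" if lip: "\<And>a b. \<bar>f a - f b\<bar> \<le> C * dist a b" for f C x
  proof -
    obtain B where "\<forall>k\<in>carrier G. \<bar>f (act k x)\<bar> \<le> B"
      using orbit_fun_bounded[of f C act x "carrier G", OF lip] bdd_orbits by blast
    then show ?thesis by (intro continuous_map_Linf[OF tg haar orbit_fun_continuous[OF act lip]]) blast
  qed
  then have "mean_action G (Linf H) M act"
    by (rule mean_action_of_invariant_mean[OF Linf_invariant_mean[OF tg haar mean] act])
  then show ?thesis ..
qed

theorem theorem4p7: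
  fixes \<tau> :: "'g topology" and G :: "('g, 'x) monoid_scheme"
    and act :: "'g \<Rightarrow> 'a::metric_space \<Rightarrow> 'a" and z0 :: 'a
    and M :: "('g \<Rightarrow> real) \<Rightarrow> real"
    and Q :: "(('a \<Rightarrow> real) \<Rightarrow> real) \<Rightarrow> (('a \<Rightarrow> real) \<Rightarrow> real)"
    and Y :: "('a set \<Rightarrow> real) set"
  assumes tg: "topological_group \<tau> G" and haus: "Hausdorff_space \<tau>"
    and lc_or_sin:
      "(SIN \<tau> G \<and> bi_invariant_mean_BUC \<tau> G M)
       \<or> (locally_compact_space \<tau> \<and>
          (\<exists>H. left_haar_measure \<tau> G H \<and> bi_invariant_mean_Linf G H M))"
    and act: "isometric_action \<tau> G act"
    and bdd_orbits: "\<forall>x. bounded ((\<lambda>g. act g x) ` carrier G)"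
    and Q_maps: "\<forall>\<phi>\<in>LipDual UNIV dist z0. Q \<phi> \<in> LipDual UNIV dist z0"
    and Q_lin: "lin_on (LipDual UNIV dist z0) Q"
    and Q_bdd: "\<exists>C. \<forall>\<phi>\<in>LipDual UNIV dist z0.
                  fnorm UNIV dist z0 (Q \<phi>) \<le> C * fnorm UNIV dist z0 \<phi>"
    and Q_proj: "\<forall>\<phi>\<in>LipDual UNIV dist z0. Q (Q \<phi>) = Q \<phi>"
    and Q_range: "Q ` LipDual UNIV dist z0 = Free UNIV dist z0"
    and Q_ker: "\<forall>g\<in>carrier G. \<forall>\<phi>\<in>LipDual UNIV dist z0.
                  Q \<phi> = zerof \<longrightarrow> Q (Tgdd act z0 g \<phi>) = zerof"
    and Y_sub: "Y \<subseteq> Lip0 (quot_space G act) quot_dist (orbcl G act z0)"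
    and Y_sep: "\<forall>\<mu>\<in>Free (quot_space G act) quot_dist (orbcl G act z0).
                  \<mu> \<noteq> zerof \<longrightarrow> (\<exists>f\<in>Y. \<mu> f \<noteq> 0)"
    and ker_sub: "{\<mu> \<in> Free UNIV dist z0. PG act z0 M Q \<mu> = zerof}
                    \<subseteq> preannih UNIV dist z0 (Psi G act ` Y)"
  shows "{\<mu> \<in> Free UNIV dist z0. PG act z0 M Q \<mu> = zerof}
           = preannih UNIV dist z0 (Lip0G G act z0)
       \<and> (\<exists>T S.
            lin_on (Free (quot_space G act) quot_dist (orbcl G act z0)) T
          \<and> T ` Free (quot_space G act) quot_dist (orbcl G act z0)
              = PG act z0 M Q ` Free UNIV dist z0
          \<and> (\<forall>x. T (delta (quot_space G act) quot_dist (orbcl G act z0) (orbcl G act x))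
                  = PG act z0 M Q (delta UNIV dist z0 x))
          \<and> (\<forall>\<nu>\<in>Free (quot_space G act) quot_dist (orbcl G act z0).
                fnorm UNIV dist z0 (T \<nu>)
                  \<le> opnorm_on (LipDual UNIV dist z0) (fnorm UNIV dist z0) (fnorm UNIV dist z0) Q
                    * fnorm (quot_space G act) quot_dist (orbcl G act z0) \<nu>)
          \<and> lin_on (Free UNIV dist z0) S
          \<and> S ` Free UNIV dist z0 \<subseteq> Free (quot_space G act) quot_dist (orbcl G act z0)
          \<and> (\<forall>x. S (delta UNIV dist z0 x)
                  = delta (quot_space G act) quot_dist (orbcl G act z0) (orbcl G act x))
          \<and> (\<forall>\<mu>\<in>Free UNIV dist z0.
                fnorm (quot_space G act) quot_dist (orbcl G act z0) (S \<mu>) \<le> fnorm UNIV dist z0 \<mu>)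
          \<and> (\<forall>\<nu>\<in>Free (quot_space G act) quot_dist (orbcl G act z0). S (T \<nu>) = \<nu>)
          \<and> (\<forall>\<mu>\<in>PG act z0 M Q ` Free UNIV dist z0. T (S \<mu>) = \<mu>))
       \<and> (PG act z0 M Q ` Free UNIV dist z0 \<subseteq> Free UNIV dist z0
          \<and> lin_on (Free UNIV dist z0) (PG act z0 M Q)
          \<and> (\<exists>C. \<forall>\<mu>\<in>Free UNIV dist z0.
                fnorm UNIV dist z0 (PG act z0 M Q \<mu>) \<le> C * fnorm UNIV dist z0 \<mu>)
          \<and> (\<forall>\<mu>\<in>Free UNIV dist z0. PG act z0 M Q (PG act z0 M Q \<mu>) = PG act z0 M Q \<mu>))"
proof -
  obtain D where "mean_action G D M act"
    using mean_action_exists[OF tg lc_or_sin act bdd_orbits] by blast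
  then interpret invariant_projection G D M act z0 Q
    using Q_maps Q_lin Q_bdd Q_proj Q_range Q_ker
    by (intro invariant_projection.intro invariant_projection_axioms.intro)
  note kernel = kernel_PG_eq[OF Y_sub Y_sep ker_sub]
  note iso = free_quot_isomorphism[OF Y_sub Y_sep ker_sub]
  from kernel iso PG_projection show ?thesis by (rule conjI[OF _ conjI])
qed

end
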